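(* The code $\mathcal C_3(\mathbb D_d)$ is equal to the $\mathbb F_3$-linear code \[ \Big\{\sum_{i=0}^{m-1}\mathrm{Tr}_{2m}\big(b_i t^{(3^m+1)3^i+1}\big)+\sum_{i=0}^{2m-1}\mathrm{Tr}_{2m}\big(b_i' t^{3^i+1}\big)+\sum_{i=0}^{m-1}\mathrm{Tr}_{m}\big(c_i t^{(3^m+1)(3^i+1)}\big)+\mathrm{Tr}_{2m}(bt)+h \;:\; b,b_i,b_i'\in\mathbb F_{3^{2m}},\ c_i\in\mathbb F_{3^m},\ h\in\mathbb F_3\Big\} \] (each element being the function of $t\in\mathbb F_{3^{2m}}$ shown). Moreover, $\mathcal C_3(\mathbb D_d)$ is invariant under all coordinate permutations $t\mapsto s_1t+s_2$ ($s_1\in\mathbb F_{3^{2m}}^*$, $s_2\in\mathbb F_{3^{2m}}$), and consequently for every $w>0$ such that $\mathcal C_3(\mathbb D_d)$ has codewords of Hamming weight $w$, the supports of the codewords of weight $w$ form a $2$-design on the point set $\mathbb F_{3^{2m}}$ (every $2$-subset of $\mathbb F_{3^{2m}}$ is contained in the same number of these supports).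
   Context: Let $m\ge 2$ be an integer and $q=3^{2m}$. For $s\in\{m,2m\}$ let $\mathrm{Tr}_s:\mathbb F_{3^s}\to\mathbb F_3$ denote the absolute trace, $\mathrm{Tr}_s(x)=\sum_{i=0}^{s-1}x^{3^i}$. Vectors in $\mathbb F_3^{q}$ are indexed by the elements of $\mathbb F_{3^{2m}}$; a function $f:\mathbb F_{3^{2m}}\to\mathbb F_3$ is identified with the vector $(f(t))_{t\in\mathbb F_{3^{2m}}}$, and products of such functions are taken pointwise. Let $\mathcal C(2m,3)=\{c(a,b,h): a\in\mathbb F_{3^m}, b\in\mathbb F_{3^{2m}}, h\in\mathbb F_3\}$ where $c(a,b,h)=(\mathrm{Tr}_{2m}(at^{3^m+1}+bt)+h)_{t\in\mathbb F_{3^{2m}}}$; this is a ternary linear code of length $3^{2m}$. Let $d$ be the minimum Hamming weight of a nonzero codeword of $\mathcal C(2m,3)$ (it equals $2\cdot 3^{2m-1}-3^{m-1}$). Let $\mathbb D_d$ be the incidence structure with point set $\mathbb F_{3^{2m}}$ whose blocks are the supports $\{t: c_t\neq 0\}$ of the codewords $c\in\mathcal C(2m,3)$ of weight $d$. Let $\mathcal C_3(\mathbb D_d)$ be the $\mathbb F_3$-linear span in $\mathbb F_3^{\mathbb F_{3^{2m}}}$ of the incidence vectors of the blocks (the incidence vector of a block $B$ has entry $1$ at $t\in B$ and $0$ elsewhere). *)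

theory Defs
  imports Main
begin

text \<open>The ambient field F_{3^{2m}} is a finite field type 'a with CARD('a) = 3^(2m).
  Vectors in F_3^{F_{3^{2m}}} are functions 'a \<Rightarrow> 'a taking values in the prime field.\<close>

definition F3 :: "'a::field set" where
  "F3 = range of_int"

definition subF :: "nat \<Rightarrow> 'a::field set" where
  "subF s = {x. x ^ (3 ^ s) = x}"

definition tr :: "nat \<Rightarrow> 'a::field \<Rightarrow> 'a" where
  "tr s x = (\<Sum>i<s. x ^ (3 ^ i))"

definition hweight :: "('a \<Rightarrow> 'b::zero) \<Rightarrow> nat" where
  "hweight c = card {t. c t \<noteq> 0}"

definition supp :: "('a \<Rightarrow> 'b::zero) \<Rightarrow> 'a set" where
  "supp c = {t. c t \<noteq> 0}"

definition codeC :: "nat \<Rightarrow> ('a::field \<Rightarrow> 'a) set" where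
  "codeC m = {(\<lambda>t. tr (2*m) (a * t ^ (3^m + 1) + b * t) + h) | a b h.
               a \<in> subF m \<and> h \<in> F3}"

definition dmin :: "nat \<Rightarrow> 'a::field itself \<Rightarrow> nat" where
  "dmin m _ = Min {hweight c | c :: 'a \<Rightarrow> 'a. c \<in> codeC m \<and> c \<noteq> (\<lambda>_. 0)}"

definition blocksD :: "nat \<Rightarrow> 'a::field set set" where
  "blocksD m = {supp c | c. c \<in> codeC m \<and> hweight c = dmin m TYPE('a)}"

definition incvec :: "'a set \<Rightarrow> ('a \<Rightarrow> 'b::{zero,one})" where
  "incvec B = (\<lambda>t. if t \<in> B then 1 else 0)"

definition span3 :: "('a \<Rightarrow> 'b::field) set \<Rightarrow> ('a \<Rightarrow> 'b) set" where
  "span3 S = {(\<lambda>t. \<Sum>v\<in>V. k v * v t) | V k. finite V \<and> V \<subseteq> S \<and> (\<forall>v\<in>V. k v \<in> F3)}"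

definition codeCD :: "nat \<Rightarrow> ('a::field \<Rightarrow> 'a) set" where
  "codeCD m = span3 (incvec ` blocksD m)"

definition codeE :: "nat \<Rightarrow> ('a::field \<Rightarrow> 'a) set" where
  "codeE m = {(\<lambda>t. (\<Sum>i<m. tr (2*m) (bb i * t ^ ((3^m + 1) * 3^i + 1)))
                 + (\<Sum>i<2*m. tr (2*m) (bb' i * t ^ (3^i + 1)))
                 + (\<Sum>i<m. tr m (cc i * t ^ ((3^m + 1) * (3^i + 1))))
                 + tr (2*m) (b * t) + h)
              | bb bb' cc b h. (\<forall>i. cc i \<in> subF m) \<and> h \<in> F3}"

end

theory Submission
  imports Defs "HOL-Computational_Algebra.Polynomial"
begin

text \<open>
  Write \<open>q = 3\<^sup>m\<close>, \<open>N(t) = t\<^sup>q\<^sup>+\<^sup>1\<close> for the norm to \<open>\<bbbF>\<^sub>q\<close>, \<open>Q\<^sub>a(t) = Tr(a N(t))\<close> and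
  \<open>L\<^sub>v(t) = Tr(v t)\<close>. Completing the square turns a codeword \<open>Q\<^sub>a + L\<^sub>b + h\<close> with \<open>a \<noteq> 0\<close> into a
  translate of \<open>Q\<^sub>a + e\<close>; its zeros are the fibres of \<open>N\<close> (of size \<open>q + 1\<close>) over the solutions of
  \<open>Tr\<^sub>m(2 a y) = -e\<close> in \<open>\<bbbF>\<^sub>q\<close>, of which there are \<open>3\<^sup>m\<^sup>-\<^sup>1\<close> when \<open>e \<noteq> 0\<close>. This gives the minimum
  weight \<open>d\<close> and shows that the minimum-weight words are the translates of \<open>Q\<^sub>a + e\<close>, \<open>a, e \<noteq> 0\<close>.

  Over \<open>\<bbbF>\<^sub>3\<close> the incidence vector of the support of \<open>c\<close> is \<open>c\<^sup>2\<close>, so \<open>C\<^sub>3(D\<^sub>d)\<close> is spanned by the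
  squares of minimum-weight words. Since \<open>4 = 1\<close>, differences of such squares produce the forms \<open>Q\<^sub>a\<close>,
  \<open>L\<^sub>v\<close>, the constant \<open>1\<close> and the products \<open>L\<^sub>v L\<^sub>w\<close>, \<open>Q\<^sub>a L\<^sub>v\<close>, \<open>Q\<^sub>a Q\<^sub>b\<close>. Expanding a product of
  traces as a sum of traces and averaging against the characters \<open>w \<mapsto> w\<^sup>e\<close> of \<open>\<bbbF>\<^sub>q\<close> or of the
  whole field isolates every monomial trace of the explicit code; conversely every square \<open>c\<^sup>2\<close>
  expands into such monomial traces. Finally \<open>C(2m, 3)\<close> and its weights are invariant under
  \<open>t \<mapsto> s\<^sub>1 t + s\<^sub>2\<close>, hence so are the blocks and their span, and the 2-transitivity of this affine
  group makes the supports of any fixed weight a 2-design.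
\<close>

section \<open>Finite fields and polynomial root counts\<close>

lemma power_card_UNIV_eq_self:
  fixes x :: "'a::{field,finite}"
  shows "x ^ card (UNIV :: 'a set) = x"
proof -
  let ?U = "UNIV - {0::'a}"
  obtain n where n: "card ?U = n" "card (UNIV :: 'a set) = Suc n"
    using card_Suc_Diff1[of UNIV "0::'a"] by (metis finite_UNIV UNIV_I)
  show ?thesis
  proof (cases "x = 0")
    case False
    have "x ^ n * (\<Prod>w\<in>?U. w) = (\<Prod>w\<in>?U. x * w)"
      by (simp add: prod.distrib n(1))
    also have "\<dots> = (\<Prod>w\<in>?U. w)"
      by (rule prod.reindex_bij_witness[of _ "\<lambda>y. y / x" "\<lambda>y. x * y"]) (use False in auto)
    finally have "x ^ n = 1" by simp
    then show ?thesis by (simp add: n(2))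
  qed (simp add: n(2))
qed

lemma of_nat_card_UNIV_eq_0: "of_nat (card (UNIV :: 'a::{comm_ring_1,finite} set)) = (0::'a)"
proof -
  have "(\<Sum>y\<in>UNIV. 1 + y) = (\<Sum>y\<in>UNIV. y :: 'a)"
    by (rule sum.reindex_bij_witness[of _ "\<lambda>y. y - 1" "\<lambda>y. 1 + y"]) auto
  then show ?thesis by (simp add: sum.distrib)
qed

lemma three_eq_0_if_card_UNIV:
  assumes "card (UNIV :: 'a::{field,finite} set) = 3 ^ n" "n > 0"
  shows "(3::'a) = 0"
proof -
  have "(3::'a) ^ n = 0" using of_nat_card_UNIV_eq_0[where 'a='a] assms(1) by simp
  then show ?thesis by simp
qed

lemma roots_power_eq_poly_bound:
  fixes q :: "'a::idom poly"
  assumes "degree q < k"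
  shows "finite {x. x ^ k = poly q x}" and "card {x. x ^ k = poly q x} \<le> k"
proof -
  define p where "p = monom 1 k - q"
  have "coeff p k = 1" using assms unfolding p_def by (simp add: coeff_eq_0)
  then have "p \<noteq> 0" by auto
  moreover have "degree p \<le> k" unfolding p_def
    using assms by (intro order.trans[OF degree_diff_le_max]) (simp add: degree_monom_le)
  moreover have roots: "{x. x ^ k = poly q x} = {x. poly p x = 0}"
    unfolding p_def by (simp add: poly_monom)
  ultimately show "finite {x. x ^ k = poly q x}" "card {x. x ^ k = poly q x} \<le> k"
    using card_poly_roots_bound[of p] poly_roots_finite[of p] by simp_all
qed

lemma card_tr_eq_le:
  fixes a :: "'a::field"
  assumes "n \<ge> 1" "a \<noteq> 0"
  shows "card {y. tr n (a * y) = c} \<le> 3 ^ (n - 1)"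
proof -
  define p where "p = (\<Sum>i<n. monom (a ^ 3 ^ i) (3 ^ i)) - [:c:]"
  have coeff_p: "coeff p k = (\<Sum>i<n. if 3 ^ i = k then a ^ 3 ^ i else 0) - (if k = 0 then c else 0)" for k
    unfolding p_def by (simp add: coeff_sum coeff_monom coeff_pCons split: nat.split)
  have "(\<Sum>i<n. if (3::nat) ^ i = 3 ^ (n - 1) then a ^ 3 ^ i else 0) = (\<Sum>i<n. if i = n - 1 then a ^ 3 ^ i else 0)"
    by (intro sum.cong) auto
  then have "coeff p (3 ^ (n - 1)) = a ^ 3 ^ (n - 1)"
    using assms(1) by (simp add: coeff_p sum.delta')
  then have "p \<noteq> 0" using assms(2) by auto
  moreover have "degree p \<le> 3 ^ (n - 1)"
  proof (rule degree_le, intro allI impI)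
    fix k :: nat assume k: "3 ^ (n - 1) < k"
    have "(3::nat) ^ i \<noteq> k" if "i < n" for i
      using power_increasing[of i "n - 1" "3::nat"] that k by auto
    then show "coeff p k = 0" using k by (simp add: coeff_p)
  qed
  moreover have "{y. tr n (a * y) = c} = {x. poly p x = 0}"
    unfolding p_def tr_def by (simp add: poly_sum poly_monom power_mult_distrib)
  ultimately show ?thesis using card_poly_roots_bound[of p] by simp
qed

lemma card_Collect_shift:
  fixes u :: "'a::ab_group_add"
  shows "card {t. P (t + u)} = card {s. P s}"
  by (rule bij_betw_same_card[of "\<lambda>t. t + u"])
     (auto simp: bij_betw_def inj_on_def image_def intro!: exI[where x="_ - u"])

lemma all_eq_bound_if_sum_ge:
  fixes f :: "'b \<Rightarrow> nat"
  assumes "finite A" "\<forall>x\<in>A. f x \<le> b" "card A * b \<le> sum f A"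
  shows "\<forall>x\<in>A. f x = b"
proof (rule ccontr)
  assume "\<not> (\<forall>x\<in>A. f x = b)"
  then obtain x0 where "x0 \<in> A" "f x0 < b" using assms(2) by force
  then have "sum f A < sum (\<lambda>_. b) A"
    using assms(1,2) by (intro sum_strict_mono_ex1) auto
  then show False using assms(3) by simp
qed

lemma sum_lessThan_add:
  "(\<Sum>i<a + b. f i) = (\<Sum>i<a. f i) + (\<Sum>i<b. f (a + i))" for f :: "nat \<Rightarrow> 'b::comm_monoid_add"
  by (induction b) (simp_all add: add.assoc)

lemma power_power_commute: "((x::'a::monoid_mult) ^ a) ^ b = (x ^ b) ^ a"
  by (simp only: power_mult[symmetric] mult.commute)

lemma exponent_shift_bounds:
  fixes n k j :: nat
  assumes "k < n" "j < n"
  shows "0 < (3 ^ n - 1 - 3 ^ k + 3 ^ j :: nat)" "3 ^ n - 1 - 3 ^ k + 3 ^ j < 2 * (3 ^ n - 1 :: nat)"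
    and "3 ^ n - 1 - 3 ^ k + 3 ^ j = (3 ^ n - 1 :: nat) \<longleftrightarrow> j = k"
proof -
  have k: "(3::nat) ^ k < 3 ^ n" "1 \<le> (3::nat) ^ k" using assms by (simp_all add: power_strict_increasing)
  have j: "(3::nat) ^ j < 3 ^ n" "1 \<le> (3::nat) ^ j" using assms by (simp_all add: power_strict_increasing)
  show "0 < (3 ^ n - 1 - 3 ^ k + 3 ^ j :: nat)" "3 ^ n - 1 - 3 ^ k + 3 ^ j < 2 * (3 ^ n - 1 :: nat)"
    using k j by arith+
  have "3 ^ n - 1 - 3 ^ k + 3 ^ j = (3 ^ n - 1 :: nat) \<longleftrightarrow> (3::nat) ^ j = 3 ^ k" using k j by arith
  then show "3 ^ n - 1 - 3 ^ k + 3 ^ j = (3 ^ n - 1 :: nat) \<longleftrightarrow> j = k" by simp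
qed

section \<open>Traces and subfields\<close>

lemma F3_add: "x \<in> F3 \<Longrightarrow> y \<in> F3 \<Longrightarrow> (x::'a::field) + y \<in> F3"
  unfolding F3_def by (auto simp flip: of_int_add)

lemma F3_mult: "x \<in> F3 \<Longrightarrow> y \<in> F3 \<Longrightarrow> (x::'a::field) * y \<in> F3"
  unfolding F3_def by (auto simp flip: of_int_mult)

lemma F3_uminus: "x \<in> F3 \<Longrightarrow> - (x::'a::field) \<in> F3"
  unfolding F3_def by (auto simp flip: of_int_minus)

lemma zero_in_F3 [simp]: "(0::'a::field) \<in> F3"
  and one_in_F3 [simp]: "(1::'a) \<in> F3"
  and numeral_in_F3 [simp]: "(numeral k::'a) \<in> F3"
  and minus_one_in_F3 [simp]: "(- 1::'a) \<in> F3"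
  unfolding F3_def by (metis rangeI of_int_0, metis rangeI of_int_1,
      metis rangeI of_int_numeral, metis rangeI of_int_1 of_int_minus)

lemma tr_zero [simp]: "tr n (0::'a::field) = 0"
  unfolding tr_def by (simp add: power_0_left)

lemma tr_uminus: "tr n (- x) = - tr n (x::'a::field)"
  unfolding tr_def by (simp add: power_minus_odd sum_negf)

lemma zero_in_subF [simp]: "(0::'a::field) \<in> subF n"
  and one_in_subF [simp]: "(1::'a) \<in> subF n"
  unfolding subF_def by simp_all

lemma subF_mult: "x \<in> subF n \<Longrightarrow> y \<in> subF n \<Longrightarrow> (x::'a::field) * y \<in> subF n"
  unfolding subF_def by (simp add: power_mult_distrib)

lemma subF_uminus: "x \<in> subF n \<Longrightarrow> - (x::'a::field) \<in> subF n"
  unfolding subF_def by (simp add: power_minus_odd)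

lemma subF_divide: "x \<in> subF n \<Longrightarrow> y \<in> subF n \<Longrightarrow> (x::'a::field) / y \<in> subF n"
  unfolding subF_def by (simp add: power_divide)

lemma subF_power: "x \<in> subF n \<Longrightarrow> (x::'a::field) ^ k \<in> subF n"
  unfolding subF_def by (simp add: power_power_commute[of x k])

lemma subF_power_3_add: "(x::'a::field) \<in> subF n \<Longrightarrow> x ^ 3 ^ (n + i) = x ^ 3 ^ i"
  unfolding subF_def by (simp add: power_add power_mult)

lemma tr_cube:
  assumes "(x::'a::field) \<in> subF n"
  shows "tr n (x ^ 3) = tr n x"
proof -
  have "tr n (x ^ 3) = (\<Sum>i<n. x ^ 3 ^ Suc i)"
    unfolding tr_def by (simp add: power_mult[symmetric])
  also have "\<dots> = (\<Sum>i<Suc n. x ^ 3 ^ i) - x"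
    by (subst sum.lessThan_Suc_shift) simp
  also have "\<dots> = tr n x"
    using subF_power_3_add[OF assms, of 0] unfolding tr_def by simp
  finally show ?thesis .
qed

lemma tr_power_3:
  assumes "(x::'a::field) \<in> subF n"
  shows "tr n (x ^ 3 ^ j) = tr n x"
proof (induction j)
  case (Suc j)
  have "x ^ 3 ^ Suc j = (x ^ 3 ^ j) ^ 3" by (simp add: power_mult[symmetric] mult.commute)
  then show ?case using tr_cube[OF subF_power[OF assms]] Suc by simp
qed simp

lemma tr_double:
  assumes "(y::'a::field) \<in> subF m"
  shows "tr (2 * m) y = 2 * tr m y"
  using subF_power_3_add[OF assms] unfolding tr_def mult_2 sum_lessThan_add by simp

lemma tr_mult_tr:
  assumes x: "(x::'a::field) \<in> subF n" and y: "y \<in> subF n"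
  shows "tr n x * tr n y = (\<Sum>j<n. tr n (x * y ^ 3 ^ j))"
proof -
  have "tr n x * tr n y = (\<Sum>i<n. x ^ 3 ^ i * tr n (y ^ 3 ^ i))"
    unfolding tr_def[of n x] sum_distrib_right using tr_power_3[OF y] by simp
  also have "\<dots> = (\<Sum>i<n. \<Sum>j<n. (x * y ^ 3 ^ j) ^ 3 ^ i)"
    unfolding tr_def sum_distrib_left power_mult_distrib
    by (simp only: power_power_commute[of y "3 ^ _" "3 ^ _"])
  also have "\<dots> = (\<Sum>j<n. tr n (x * y ^ 3 ^ j))"
    unfolding tr_def by (rule sum.swap)
  finally show ?thesis .
qed

lemma sum_tr_delta:
  assumes "i < (n::nat)"
  shows "(\<Sum>j<n. tr s ((if j = i then \<beta> else 0) * X j)) = tr s (\<beta> * X i :: 'a::field)"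
proof -
  have "(\<Sum>j<n. tr s ((if j = i then \<beta> else 0) * X j)) = (\<Sum>j<n. if j = i then tr s (\<beta> * X j) else 0)"
    by (rule sum.cong) simp_all
  then show ?thesis using assms by simp
qed

lemma subF_power_minus_one:
  assumes "(w::'a::field) \<in> subF n" "w \<noteq> 0"
  shows "w ^ (3 ^ n - 1) = 1"
proof -
  have "w ^ (3 ^ n - 1) * w = w ^ 3 ^ n" by (simp flip: power_Suc2)
  then show ?thesis using assms unfolding subF_def by simp
qed

lemma sum_power_subF_eq_0:
  assumes card: "card (subF n :: 'a::field set) = 3 ^ n" and e: "0 < e" "e < 3 ^ n - 1"
  shows "(\<Sum>w\<in>subF n. w ^ e) = (0::'a)"
proof -
  have fin: "finite (subF n :: 'a set)" using card by (intro card_ge_0_finite) simp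
  have "\<not> subF n - {0} \<subseteq> {x::'a. x ^ e = 1}"
  proof
    assume sub: "subF n - {0} \<subseteq> {x::'a. x ^ e = 1}"
    have "card (subF n - {0::'a}) \<le> card {x::'a. x ^ e = 1}"
      using roots_power_eq_poly_bound(1)[of 1 e] e(1) sub by (intro card_mono) simp_all
    also have "\<dots> \<le> e" using roots_power_eq_poly_bound(2)[of 1 e] e(1) by simp
    finally show False using card fin e(2) by (simp add: card_Diff_singleton)
  qed
  then obtain c :: 'a where c: "c \<in> subF n" "c \<noteq> 0" "c ^ e \<noteq> 1" by blast
  have "(\<Sum>w\<in>subF n. w ^ e) = (\<Sum>w\<in>subF n. (c * w) ^ e)"
    by (rule sum.reindex_bij_witness[where i="\<lambda>y. c * y" and j="\<lambda>y. y / c"])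
       (use c(1,2) subF_mult subF_divide in auto)
  also have "\<dots> = c ^ e * (\<Sum>w\<in>subF n. w ^ e)"
    by (simp add: power_mult_distrib sum_distrib_left)
  finally have "(1 - c ^ e) * (\<Sum>w\<in>subF n. w ^ e) = 0" by (simp add: algebra_simps)
  then show ?thesis using c(3) by simp
qed

section \<open>\<open>\<bbbF>\<^sub>3\<close>-linear spans\<close>

definition F3_subspace :: "('a \<Rightarrow> 'b::field) set \<Rightarrow> bool" where
  "F3_subspace V \<longleftrightarrow> (\<lambda>_. 0) \<in> V \<and> (\<forall>f\<in>V. \<forall>g\<in>V. (\<lambda>t. f t + g t) \<in> V)
    \<and> (\<forall>k\<in>F3. \<forall>f\<in>V. (\<lambda>t. k * f t) \<in> V)"

lemma F3_subspace_zero: "F3_subspace V \<Longrightarrow> (\<lambda>_. 0) \<in> V"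
  and F3_subspace_add: "F3_subspace V \<Longrightarrow> f \<in> V \<Longrightarrow> g \<in> V \<Longrightarrow> (\<lambda>t. f t + g t) \<in> V"
  and F3_subspace_scale: "F3_subspace V \<Longrightarrow> k \<in> F3 \<Longrightarrow> f \<in> V \<Longrightarrow> (\<lambda>t. k * f t) \<in> V"
  unfolding F3_subspace_def by blast+

lemma F3_subspace_sum:
  assumes "F3_subspace V" "finite A" "\<And>x. x \<in> A \<Longrightarrow> f x \<in> V"
  shows "(\<lambda>t. \<Sum>x\<in>A. f x t) \<in> V"
  using assms(2,3)
  by (induction A rule: finite_induct) (simp_all add: F3_subspace_zero F3_subspace_add assms(1))

lemma sum_extend_by_zero:
  assumes "finite W" "U \<subseteq> W"
  shows "(\<Sum>v\<in>U. k v * v t) = (\<Sum>v\<in>W. (if v \<in> U then k v else 0) * (v t :: 'b::field))"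
proof -
  have "(\<Sum>v\<in>W. (if v \<in> U then k v else 0) * v t) = (\<Sum>v\<in>W. if v \<in> U then k v * v t else 0)"
    by (rule sum.cong) simp_all
  also have "\<dots> = (\<Sum>v\<in>W \<inter> U. k v * v t)" using assms(1) by (rule sum.inter_restrict[symmetric])
  finally show ?thesis using assms(2) by (simp add: Int_absorb1)
qed

lemma span3I:
  assumes "finite U" "U \<subseteq> S" "\<forall>v\<in>U. k v \<in> F3" "f = (\<lambda>t. \<Sum>v\<in>U. k v * v t)"
  shows "f \<in> span3 S"
  using assms unfolding span3_def by blast

lemma span3E:
  assumes "f \<in> span3 S"
  obtains U k where "finite U" "U \<subseteq> S" "\<forall>v\<in>U. k v \<in> F3" "f = (\<lambda>t. \<Sum>v\<in>U. k v * v t)"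
  using assms unfolding span3_def by blast

lemma span3_add:
  assumes "f \<in> span3 S" "g \<in> span3 S"
  shows "(\<lambda>t. f t + g t) \<in> span3 (S :: ('a \<Rightarrow> 'b::field) set)"
proof -
  obtain U1 k1 where
    f: "finite U1" "U1 \<subseteq> S" "\<forall>v\<in>U1. k1 v \<in> F3" "f = (\<lambda>t. \<Sum>v\<in>U1. k1 v * v t)"
    using assms(1) by (rule span3E)
  obtain U2 k2 where
    g: "finite U2" "U2 \<subseteq> S" "\<forall>v\<in>U2. k2 v \<in> F3" "g = (\<lambda>t. \<Sum>v\<in>U2. k2 v * v t)"
    using assms(2) by (rule span3E)
  define k where "k v = (if v \<in> U1 then k1 v else 0) + (if v \<in> U2 then k2 v else 0)" for v
  show ?thesis
  proof (rule span3I)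
    show "finite (U1 \<union> U2)" "U1 \<union> U2 \<subseteq> S" using f(1,2) g(1,2) by simp_all
    show "\<forall>v\<in>U1 \<union> U2. k v \<in> F3" using f(3) g(3) unfolding k_def by (auto intro: F3_add)
    show "(\<lambda>t. f t + g t) = (\<lambda>t. \<Sum>v\<in>U1 \<union> U2. k v * v t)"
    proof
      fix t
      have "f t = (\<Sum>v\<in>U1 \<union> U2. (if v \<in> U1 then k1 v else 0) * v t)"
        unfolding f(4) by (rule sum_extend_by_zero) (use f(1) g(1) in auto)
      moreover have "g t = (\<Sum>v\<in>U1 \<union> U2. (if v \<in> U2 then k2 v else 0) * v t)"
        unfolding g(4) by (rule sum_extend_by_zero) (use f(1) g(1) in auto)
      ultimately show "f t + g t = (\<Sum>v\<in>U1 \<union> U2. k v * v t)"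
        unfolding k_def distrib_right sum.distrib by (rule arg_cong2[where f = "(+)"])
    qed
  qed
qed

lemma span3_scale:
  assumes "c \<in> F3" "f \<in> span3 S"
  shows "(\<lambda>t. c * f t) \<in> span3 (S :: ('a \<Rightarrow> 'b::field) set)"
proof -
  obtain U k where f: "finite U" "U \<subseteq> S" "\<forall>v\<in>U. k v \<in> F3" "f = (\<lambda>t. \<Sum>v\<in>U. k v * v t)"
    using assms(2) by (rule span3E)
  show ?thesis
  proof (rule span3I[OF f(1,2)])
    show "\<forall>v\<in>U. c * k v \<in> F3" using f(3) assms(1) by (simp add: F3_mult)
    show "(\<lambda>t. c * f t) = (\<lambda>t. \<Sum>v\<in>U. (c * k v) * v t)"
      unfolding f(4) by (simp add: sum_distrib_left mult.assoc)
  qed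
qed

lemma F3_subspace_span3: "F3_subspace (span3 (S :: ('a \<Rightarrow> 'b::field) set))"
proof -
  have "(\<lambda>_. 0) \<in> span3 S" by (rule span3I[of "{}"]) simp_all
  then show ?thesis unfolding F3_subspace_def using span3_add span3_scale by blast
qed

lemma span3_superset: "S \<subseteq> span3 (S :: ('a \<Rightarrow> 'b::field) set)"
proof
  fix v assume "v \<in> S"
  then show "v \<in> span3 S" by (intro span3I[of "{v}" _ "\<lambda>_. 1"]) simp_all
qed

lemma span3_minimal:
  assumes "F3_subspace V" "S \<subseteq> V"
  shows "span3 S \<subseteq> V"
proof
  fix f assume "f \<in> span3 S"
  then obtain U k where f: "finite U" "U \<subseteq> S" "\<forall>v\<in>U. k v \<in> F3" "f = (\<lambda>t. \<Sum>v\<in>U. k v * v t)"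
    by (elim span3E)
  show "f \<in> V"
    unfolding f(4) using f(1-3) assms by (intro F3_subspace_sum F3_subspace_scale) auto
qed

lemma span3_compose:
  assumes "\<And>v. v \<in> S \<Longrightarrow> (\<lambda>t. v (\<sigma> t)) \<in> span3 S" and "f \<in> span3 (S :: ('a \<Rightarrow> 'b::field) set)"
  shows "(\<lambda>t. f (\<sigma> t)) \<in> span3 S"
proof -
  have "F3_subspace {f. (\<lambda>t. f (\<sigma> t)) \<in> span3 S}"
    using F3_subspace_span3[of S] unfolding F3_subspace_def by simp
  then have "span3 S \<subseteq> {f. (\<lambda>t. f (\<sigma> t)) \<in> span3 S}"
    using assms(1) by (intro span3_minimal) auto
  then show ?thesis using assms(2) by blast
qed

section \<open>Fields of characteristic 3\<close>

locale char3_field =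
  fixes ty :: "'a::field itself"
  assumes three_eq_0: "(3::'a) = 0"
begin

lemma CHAR_eq_3: "CHAR('a) = 3"
proof -
  have "CHAR('a) dvd 3"
    using three_eq_0 of_nat_eq_0_iff_char_dvd[where 'a='a, of 3] by simp
  moreover have "prime (3::nat)" by simp
  ultimately have "CHAR('a) = 1 \<or> CHAR('a) = 3" unfolding prime_nat_iff by blast
  then show ?thesis using CHAR_not_1' by auto
qed

lemma two_neq_0: "(2::'a) \<noteq> 0"
proof
  assume "(2::'a) = 0"
  moreover have "(3::'a) = 2 + 1" by simp
  ultimately show False using three_eq_0 by simp
qed

lemma eq_mod_3: "x = y + 3 * z \<Longrightarrow> (x::'a) = y"
  using three_eq_0 by simp

lemma uminus_two_mult: "- (2 * x) = (x::'a)"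
proof -
  have "x + 2 * x = 3 * x" by simp
  then have "x = - (2 * x)" using three_eq_0 by (simp add: eq_neg_iff_add_eq_0)
  then show ?thesis by simp
qed

lemma frobenius_add: "((x::'a) + y) ^ 3 ^ i = x ^ 3 ^ i + y ^ 3 ^ i"
  by (rule freshmans_dream') (simp_all add: CHAR_eq_3)

lemma frobenius_diff: "((x::'a) - y) ^ 3 ^ i = x ^ 3 ^ i - y ^ 3 ^ i"
  using frobenius_add[of x "- y" i] by (simp add: power_minus_odd)

lemma frobenius_sum: "(\<Sum>j\<in>A. f j) ^ 3 ^ i = (\<Sum>j\<in>A. (f j :: 'a) ^ 3 ^ i)"
  by (rule freshmans_dream_sum') (simp_all add: CHAR_eq_3)

lemma tr_add: "tr n ((x::'a) + y) = tr n x + tr n y"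
  unfolding tr_def by (simp add: frobenius_add sum.distrib)

lemma tr_diff: "tr n ((x::'a) - y) = tr n x - tr n y"
  unfolding tr_def by (simp add: frobenius_diff sum_subtractf)

lemma tr_sum: "tr n (\<Sum>j\<in>A. f j) = (\<Sum>j\<in>A. tr n (f j :: 'a))"
  unfolding tr_def frobenius_sum by (rule sum.swap)

lemma F3_eq: "(F3 :: 'a set) = {0, 1, - 1}"
proof (intro equalityI subsetI)
  fix x :: 'a assume "x \<in> F3"
  then obtain k where x: "x = of_int k" unfolding F3_def by auto
  have "x = of_int (k mod 3 + 3 * (k div 3))" unfolding x by simp
  also have "\<dots> = of_int (k mod 3)"
    by (simp only: of_int_add of_int_mult of_int_numeral three_eq_0) simp
  finally have x_mod: "x = of_int (k mod 3)" .
  have "(2::'a) = - 1" using three_eq_0 by (simp add: eq_neg_iff_add_eq_0)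
  moreover have "k mod 3 = 0 \<or> k mod 3 = 1 \<or> k mod 3 = 2" by auto
  ultimately show "x \<in> {0, 1, - 1}" using x_mod by auto
qed auto

lemma F3_iff_cube: "(x::'a) \<in> F3 \<longleftrightarrow> x ^ 3 = x"
proof -
  have "x ^ 3 - x = x * (x - 1) * (x + 1)" by algebra
  then have "x ^ 3 = x \<longleftrightarrow> x = 0 \<or> x = 1 \<or> x = - 1"
    by (auto simp: eq_neg_iff_add_eq_0)
  then show ?thesis using F3_eq by auto
qed

lemma F3_square: "(x::'a) \<in> F3 \<Longrightarrow> x \<noteq> 0 \<Longrightarrow> x ^ 2 = 1"
  using F3_eq by auto

lemma F3_power_3: "(k::'a) \<in> F3 \<Longrightarrow> k ^ 3 ^ i = k"
proof (induction i)
  case (Suc i)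
  have "k ^ 3 ^ Suc i = (k ^ 3 ^ i) ^ 3" by (simp add: power_mult[symmetric] mult.commute)
  then show ?case using Suc F3_iff_cube by simp
qed simp

lemma F3_subset_subF: "(F3 :: 'a set) \<subseteq> subF n"
  unfolding subF_def using F3_power_3 by blast

lemma numeral_in_subF [simp]: "(numeral k :: 'a) \<in> subF n"
  by (rule subsetD[OF F3_subset_subF]) simp

lemma card_F3: "card (F3 :: 'a set) = 3"
  using two_neq_0 by (simp add: F3_eq eq_neg_iff_add_eq_0[symmetric])

lemma tr_mult_F3: "(k::'a) \<in> F3 \<Longrightarrow> tr n (k * x) = k * tr n x"
  unfolding tr_def by (simp add: power_mult_distrib F3_power_3 sum_distrib_left)

lemma tr_in_F3:
  assumes "(x::'a) \<in> subF n"
  shows "tr n x \<in> F3"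
proof -
  have "tr n x ^ 3 = (\<Sum>i<n. (x ^ 3 ^ i) ^ 3)"
    unfolding tr_def using frobenius_sum[of _ _ 1] by simp
  also have "\<dots> = tr n (x ^ 3)"
    unfolding tr_def by (intro sum.cong refl) (rule power_power_commute)
  finally show ?thesis using tr_cube[OF assms] F3_iff_cube by simp
qed

lemma subF_add: "x \<in> subF n \<Longrightarrow> y \<in> subF n \<Longrightarrow> (x::'a) + y \<in> subF n"
  unfolding subF_def by (simp add: frobenius_add)

lemma subF_diff: "x \<in> subF n \<Longrightarrow> y \<in> subF n \<Longrightarrow> (x::'a) - y \<in> subF n"
  unfolding subF_def by (simp add: frobenius_diff)

lemma incvec_supp_eq_square:
  assumes "\<And>t. (c t :: 'a) \<in> F3"
  shows "incvec (supp c) = (\<lambda>t. c t ^ 2)"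
  unfolding incvec_def supp_def using F3_square[OF assms] by fastforce

lemma sum_power_subF:
  assumes card: "card (subF n :: 'a set) = 3 ^ n" and e: "0 < e" "e < 2 * (3 ^ n - 1)"
  shows "(\<Sum>w\<in>subF n. w ^ e) = (if e = 3 ^ n - 1 then - 1 else (0::'a))"
proof -
  let ?N = "3 ^ n - 1 :: nat"
  have fin: "finite (subF n :: 'a set)" using card by (intro card_ge_0_finite) simp
  have "n > 0" using e by (cases n) auto
  show ?thesis
  proof (cases "e = ?N")
    case True
    have "(\<Sum>w\<in>subF n. w ^ e) = (\<Sum>w\<in>subF n - {0}. (w::'a) ^ e)"
      using sum.remove[OF fin zero_in_subF, of "\<lambda>w. w ^ e"] e(1) by (simp add: zero_power)
    also have "\<dots> = (\<Sum>w\<in>subF n - {0::'a}. 1::'a)"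
      using subF_power_minus_one True by (intro sum.cong) auto
    also have "\<dots> = of_nat (3 ^ n - 1)"
      using fin card by (simp add: card_Diff_singleton)
    also have "\<dots> = - 1" using three_eq_0 \<open>n > 0\<close> by (simp add: of_nat_diff)
    finally show ?thesis using True by simp
  next
    case False
    have r: "0 < e mod ?N" "e mod ?N < ?N"
      using e False by (auto simp: mod_if)
    have "w ^ e = w ^ (e mod ?N)" if "w \<in> subF n" for w :: 'a
    proof (cases "w = 0")
      case False
      have "w ^ e = w ^ (?N * (e div ?N) + e mod ?N)" by simp
      also have "\<dots> = (w ^ ?N) ^ (e div ?N) * w ^ (e mod ?N)"
        by (simp only: power_add power_mult)
      finally have "w ^ e = (w ^ ?N) ^ (e div ?N) * w ^ (e mod ?N)" .
      then show ?thesis using subF_power_minus_one[OF that False] by simp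
    qed (use e r in \<open>simp add: zero_power\<close>)
    then have "(\<Sum>w\<in>subF n. w ^ e) = (\<Sum>w\<in>subF n. (w::'a) ^ (e mod ?N))" by simp
    then show ?thesis using sum_power_subF_eq_0[OF card r] False by simp
  qed
qed

lemma sum_power_subF_delta:
  assumes card: "card (subF n :: 'a set) = 3 ^ n" and "k < n" "j < n"
  shows "(\<Sum>w\<in>subF n. w ^ (3 ^ n - 1 - 3 ^ k + 3 ^ j)) = (if j = k then - 1 else (0::'a))"
  using sum_power_subF[OF card] exponent_shift_bounds[OF assms(2,3)] by simp

lemma sum_tr_orthogonality:
  assumes card: "card (subF n :: 'a set) = 3 ^ n" and k: "k < n"
  shows "(\<Sum>w\<in>subF n. \<Sum>j<n. tr s (\<beta> * w ^ (3 ^ n - 1 - 3 ^ k) * w ^ 3 ^ j * X j))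
    = - tr s (\<beta> * X k :: 'a)"
proof -
  have "(\<Sum>w\<in>subF n. \<Sum>j<n. tr s (\<beta> * w ^ (3 ^ n - 1 - 3 ^ k) * w ^ 3 ^ j * X j))
      = (\<Sum>j<n. tr s (\<Sum>w\<in>subF n. \<beta> * w ^ (3 ^ n - 1 - 3 ^ k) * w ^ 3 ^ j * X j))"
    unfolding tr_sum by (rule sum.swap)
  also have "\<dots> = (\<Sum>j<n. tr s (\<beta> * X j * (\<Sum>w\<in>subF n. w ^ (3 ^ n - 1 - 3 ^ k + 3 ^ j))))"
    by (simp add: sum_distrib_left power_add mult_ac)
  also have "\<dots> = (\<Sum>j<n. if j = k then - tr s (\<beta> * X j) else 0)"
    using sum_power_subF_delta[OF card k] by (intro sum.cong) (simp_all add: tr_uminus)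
  also have "\<dots> = - tr s (\<beta> * X k)" using k by simp
  finally show ?thesis .
qed

end

section \<open>The field with \<open>3\<^sup>2\<^sup>m\<close> elements\<close>

locale gf_3_2m =
  fixes m :: nat and ty :: "'a::{field,finite} itself"
  assumes two_le_m: "2 \<le> m"
    and card_UNIV: "card (UNIV :: 'a set) = 3 ^ (2 * m)"
begin

sublocale char3_field ty
  using three_eq_0_if_card_UNIV[OF card_UNIV] two_le_m by unfold_locales simp

lemma mem_subF_2m [simp]: "(x::'a) \<in> subF (2 * m)"
  unfolding subF_def using power_card_UNIV_eq_self[of x] card_UNIV by simp

lemma subF_2m_eq_UNIV: "subF (2 * m) = (UNIV :: 'a set)"
  by auto

lemma card_subF_2m: "card (subF (2 * m) :: 'a set) = 3 ^ (2 * m)"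
  unfolding subF_2m_eq_UNIV by (rule card_UNIV)

lemma frobenius_surj: "\<exists>u::'a. u ^ 3 ^ m = v"
proof -
  have "inj (\<lambda>u::'a. u ^ 3 ^ m)"
  proof (rule injI)
    fix u w :: 'a assume "u ^ 3 ^ m = w ^ 3 ^ m"
    then have "(u - w) ^ 3 ^ m = 0" by (simp add: frobenius_diff)
    then show "u = w" by simp
  qed
  then have "surj (\<lambda>u::'a. u ^ 3 ^ m)" by (simp add: finite_UNIV_inj_surj)
  then show ?thesis by (metis surjD)
qed

lemma frobenius_twice: "((t::'a) ^ 3 ^ m) ^ 3 ^ m = t"
  using mem_subF_2m[of t] unfolding subF_def mult_2 by (simp add: power_add power_mult)

definition rel_norm :: "'a \<Rightarrow> 'a" where
  "rel_norm t = t ^ (3 ^ m + 1)"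

lemma rel_norm_eq_0_iff [simp]: "rel_norm t = 0 \<longleftrightarrow> t = 0"
  unfolding rel_norm_def by simp

lemma rel_norm_mult: "rel_norm (x * y) = rel_norm x * rel_norm y"
  unfolding rel_norm_def by (simp add: power_mult_distrib)

lemma rel_norm_add: "rel_norm (t + u) = rel_norm t + t ^ 3 ^ m * u + u ^ 3 ^ m * t + rel_norm u"
  unfolding rel_norm_def by (simp add: frobenius_add algebra_simps)

lemma rel_norm_in_subF: "rel_norm t \<in> subF m"
proof -
  have "(t ^ (3 ^ m + 1)) ^ 3 ^ m = t ^ 3 ^ (m + m) * t ^ 3 ^ m"
    by (simp add: power_add power_mult algebra_simps flip: power_mult)
  then show ?thesis using mem_subF_2m[of t] unfolding subF_def rel_norm_def mult_2 by simp
qed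

lemma card_subF_le: "card (subF m :: 'a set) \<le> 3 ^ m"
proof -
  have "1 < (3::nat) ^ m" using two_le_m by (intro one_less_power) auto
  then have "degree [:0, 1::'a:] < 3 ^ m" by simp
  then show ?thesis
    using roots_power_eq_poly_bound(2)[of "[:0, 1::'a:]" "3 ^ m"] unfolding subF_def by simp
qed

lemma card_rel_norm_fiber_le: "card {t. rel_norm t = y} \<le> 3 ^ m + 1"
  using roots_power_eq_poly_bound(2)[of "[:y:]" "3 ^ m + 1"] unfolding rel_norm_def by simp

lemma card_subF_and_rel_norm_fiber:
  shows "card (subF m - {0::'a}) = 3 ^ m - 1"
    and "\<forall>y\<in>subF m - {0::'a}. card {t. rel_norm t = y} = 3 ^ m + 1"
proof -
  let ?S = "subF m - {0::'a}"
  let ?f = "\<lambda>y. card {t. rel_norm t = y}"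
  have card_S: "card ?S \<le> 3 ^ m - 1"
    using card_subF_le by (simp add: card_Diff_singleton)
  have "UNIV - {0::'a} = (\<Union>y\<in>?S. {t. rel_norm t = y})"
    using rel_norm_in_subF by auto
  then have "card (UNIV - {0::'a}) = card (\<Union>y\<in>?S. {t. rel_norm t = y})" by simp
  also have "\<dots> = sum ?f ?S" by (rule card_UN_disjoint) auto
  finally have "card (UNIV - {0::'a}) = sum ?f ?S" .
  then have sum_f: "sum ?f ?S = (3 ^ m - 1) * (3 ^ m + 1)"
    using card_UNIV by (simp add: card_Diff_singleton algebra_simps flip: power_add mult_2)
  have le: "\<forall>y\<in>?S. ?f y \<le> 3 ^ m + 1" using card_rel_norm_fiber_le by auto
  then have "sum ?f ?S \<le> card ?S * (3 ^ m + 1)"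
    using sum_bounded_above[of ?S ?f "3 ^ m + 1"] by simp
  then have "(3 ^ m - 1) * (3 ^ m + 1) \<le> card ?S * (3 ^ m + 1)" using sum_f by simp
  then have "3 ^ m - 1 \<le> card ?S" by (rule mult_right_le_imp_le) simp
  then show card_eq: "card ?S = 3 ^ m - 1" using card_S by simp
  show "\<forall>y\<in>?S. ?f y = 3 ^ m + 1"
    by (rule all_eq_bound_if_sum_ge) (use le sum_f card_eq in simp_all)
qed

lemma card_subF: "card (subF m :: 'a set) = 3 ^ m"
proof -
  have "card (subF m :: 'a set) = Suc (card (subF m - {0::'a}))"
    using card_Suc_Diff1[of "subF m" "0::'a"] by simp
  then show ?thesis using card_subF_and_rel_norm_fiber(1) by simp
qed

lemma card_tr_fiber:
  assumes a: "(a::'a) \<in> subF m" "a \<noteq> 0" and c: "c \<in> F3"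
  shows "card {y \<in> subF m. tr m (a * y) = c} = 3 ^ (m - 1)"
proof -
  let ?f = "\<lambda>c. card {y \<in> subF m. tr m (a * y) = (c::'a)}"
  have le: "\<forall>c\<in>F3. ?f c \<le> 3 ^ (m - 1)"
    using card_tr_eq_le[of m a] two_le_m a(2)
    by (auto intro: order.trans[OF card_mono[of "{y. tr m (a * y) = _}"]])
  have "subF m = (\<Union>c\<in>F3. {y \<in> subF m. tr m (a * y) = (c::'a)})"
    using tr_in_F3 subF_mult a(1) by blast
  then have "card (subF m :: 'a set) = card (\<Union>c\<in>F3. {y \<in> subF m. tr m (a * y) = (c::'a)})"
    by (rule arg_cong)
  also have "\<dots> = sum ?f F3" by (rule card_UN_disjoint) auto
  finally have "card (subF m :: 'a set) = sum ?f F3" .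
  then have "sum ?f F3 = card (F3 :: 'a set) * 3 ^ (m - 1)"
    using card_subF card_F3 two_le_m by (simp add: power_eq_if)
  then show ?thesis using all_eq_bound_if_sum_ge[OF _ le] c by simp
qed

lemma tr_rel_norm_shift:
  assumes a: "(a::'a) \<in> subF m"
  shows "tr (2 * m) (a * rel_norm (t + u))
    = tr (2 * m) (a * rel_norm t) + tr (2 * m) (2 * a * u ^ 3 ^ m * t) + tr (2 * m) (a * rel_norm u)"
proof -
  \<comment> \<open>the cross term \<open>a t\<^sup>q u\<close> is the \<open>q\<close>-th power of \<open>a u\<^sup>q t\<close>, so both have the same trace\<close>
  have "(a * u ^ 3 ^ m * t) ^ 3 ^ m = a * t ^ 3 ^ m * u"
    using a frobenius_twice unfolding subF_def by (simp add: power_mult_distrib)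
  then have conj: "tr (2 * m) (a * t ^ 3 ^ m * u) = tr (2 * m) (a * u ^ 3 ^ m * t)"
    using tr_power_3[OF mem_subF_2m, of "a * u ^ 3 ^ m * t" m] by simp
  have cross: "tr (2 * m) (2 * a * u ^ 3 ^ m * t) = tr (2 * m) (a * t ^ 3 ^ m * u + a * u ^ 3 ^ m * t)"
    using conj tr_mult_F3[of 2 "2 * m" "a * u ^ 3 ^ m * t"] by (simp add: tr_add mult.assoc)
  have "a * rel_norm (t + u) = a * rel_norm t + (a * t ^ 3 ^ m * u + a * u ^ 3 ^ m * t) + a * rel_norm u"
    by (simp add: rel_norm_add algebra_simps)
  then show ?thesis unfolding cross by (simp only: tr_add)
qed

lemma tr_rel_norm_complete_square:
  assumes a: "(a::'a) \<in> subF m" "a \<noteq> 0"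
  obtains u where "\<And>t. tr (2 * m) (a * rel_norm t + b * t)
    = tr (2 * m) (a * rel_norm (t + u)) - tr (2 * m) (a * rel_norm u)"
proof -
  obtain u where u: "u ^ 3 ^ m = b / (2 * a)" using frobenius_surj by blast
  then have b: "b = 2 * a * u ^ 3 ^ m" using a(2) two_neq_0 by simp
  have "tr (2 * m) (a * rel_norm t + b * t)
      = tr (2 * m) (a * rel_norm (t + u)) - tr (2 * m) (a * rel_norm u)" for t
    unfolding tr_rel_norm_shift[OF a(1), of t u] b tr_add by simp
  then show ?thesis by (rule that)
qed

section \<open>The minimum weight of \<open>C(2m, 3)\<close>\<close>

definition min_weight :: nat where
  "min_weight = 2 * 3 ^ (2 * m - 1) - 3 ^ (m - 1)"

lemma min_weight_eq: "3 ^ (2 * m) - 3 ^ (m - 1) * (3 ^ m + 1) = min_weight"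
proof -
  obtain k where k: "m = Suc k" using two_le_m by (cases m) auto
  have "(3::nat) ^ (2 * m) = 9 * (3 ^ k * 3 ^ k)" "(3::nat) ^ (2 * m - 1) = 3 * (3 ^ k * 3 ^ k)"
    "(3::nat) ^ m = 3 * 3 ^ k" "(3::nat) ^ (m - 1) = 3 ^ k"
    unfolding k by (simp_all add: power_add[symmetric] mult_2)
  then show ?thesis unfolding min_weight_def by (simp add: algebra_simps)
qed

lemma min_weight_pos: "0 < min_weight"
proof -
  have "(3::nat) ^ (m - 1) \<le> 3 ^ (2 * m - 1)" by (rule power_increasing) auto
  moreover have "(0::nat) < 3 ^ (2 * m - 1)" by simp
  ultimately show ?thesis unfolding min_weight_def by linarith
qed

lemma codeC_eq:
  "codeC m = {(\<lambda>t. tr (2 * m) (a * rel_norm t + b * t) + h) | a b h. a \<in> subF m \<and> h \<in> F3}"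
  unfolding codeC_def rel_norm_def ..

lemma codeC_wordI: "a \<in> subF m \<Longrightarrow> h \<in> F3 \<Longrightarrow> (\<lambda>t. tr (2 * m) (a * rel_norm t + b * t) + h) \<in> codeC m"
  unfolding codeC_eq by blast

lemma codeC_values_in_F3: "c \<in> codeC m \<Longrightarrow> (c::'a \<Rightarrow> 'a) t \<in> F3"
  unfolding codeC_eq by (auto intro!: F3_add tr_in_F3[OF mem_subF_2m])

lemma shifted_rel_norm_form_in_codeC:
  assumes "(a::'a) \<in> subF m" "e \<in> F3"
  shows "(\<lambda>t. tr (2 * m) (a * rel_norm (t + u)) + e) \<in> codeC m"
proof -
  have "(\<lambda>t. tr (2 * m) (a * rel_norm (t + u)) + e) =
        (\<lambda>t. tr (2 * m) (a * rel_norm t + (2 * a * u ^ 3 ^ m) * t) + (tr (2 * m) (a * rel_norm u) + e))"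
    using tr_rel_norm_shift[OF assms(1)] by (simp add: tr_add add.assoc)
  moreover have "tr (2 * m) (a * rel_norm u) + e \<in> F3"
    using tr_in_F3[OF mem_subF_2m] assms(2) F3_add by blast
  ultimately show ?thesis unfolding codeC_eq using assms(1) by blast
qed

lemma hweight_eq_card_zeros: "hweight (c::'a \<Rightarrow> 'a) = 3 ^ (2 * m) - card {t. c t = 0}"
proof -
  have "{t. c t \<noteq> 0} = UNIV - {t. c t = 0}" by auto
  then show ?thesis unfolding hweight_def using card_UNIV by (simp add: card_Diff_subset)
qed

lemma zeros_rel_norm_form:
  assumes "(a::'a) \<in> subF m"
  shows "{s. tr (2 * m) (a * rel_norm s) + e = 0}
    = (\<Union>y\<in>{y \<in> subF m. tr m (2 * a * y) = - e}. {s. rel_norm s = y})"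
proof -
  have "tr (2 * m) (a * rel_norm s) = tr m (2 * a * rel_norm s)" for s
    using tr_double[OF subF_mult[OF assms rel_norm_in_subF]] tr_mult_F3[of 2 m "a * rel_norm s"]
    by (simp add: mult.assoc)
  then show ?thesis using rel_norm_in_subF by (auto simp: eq_neg_iff_add_eq_0)
qed

lemma card_zeros_rel_norm_form_le:
  assumes a: "(a::'a) \<in> subF m" "a \<noteq> 0"
  shows "card {s. tr (2 * m) (a * rel_norm s) + e = 0} \<le> 3 ^ (m - 1) * (3 ^ m + 1)"
proof -
  let ?Y = "{y \<in> subF m. tr m (2 * a * y) = - e}"
  have "card ?Y \<le> card {y. tr m (2 * a * y) = - e}" by (rule card_mono) auto
  also have "\<dots> \<le> 3 ^ (m - 1)" using card_tr_eq_le[of m "2 * a"] two_le_m a(2) two_neq_0 by simp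
  finally have card_Y: "card ?Y \<le> 3 ^ (m - 1)" .
  have "card {s. tr (2 * m) (a * rel_norm s) + e = 0} \<le> (\<Sum>y\<in>?Y. card {s. rel_norm s = y})"
    unfolding zeros_rel_norm_form[OF a(1)] by (rule card_UN_le) simp
  also have "\<dots> \<le> card ?Y * (3 ^ m + 1)"
    using sum_bounded_above[of ?Y "\<lambda>y. card {s. rel_norm s = y}" "3 ^ m + 1"] card_rel_norm_fiber_le
    by simp
  also have "\<dots> \<le> 3 ^ (m - 1) * (3 ^ m + 1)" using card_Y by (rule mult_right_mono) simp
  finally show ?thesis .
qed

lemma card_zeros_rel_norm_form:
  assumes a: "(a::'a) \<in> subF m" "a \<noteq> 0" and e: "e \<in> F3" "e \<noteq> 0"
  shows "card {s. tr (2 * m) (a * rel_norm s) + e = 0} = 3 ^ (m - 1) * (3 ^ m + 1)"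
proof -
  let ?Y = "{y \<in> subF m. tr m (2 * a * y) = - e}"
  have "2 * a \<in> subF m" using a(1) by (simp add: subF_mult)
  moreover have "2 * a \<noteq> 0" using a(2) two_neq_0 by simp
  moreover have "- e \<in> F3" using e(1) by (rule F3_uminus)
  ultimately have card_Y: "card ?Y = 3 ^ (m - 1)" by (rule card_tr_fiber)
  have Y_sub: "?Y \<subseteq> subF m - {0}" using e(2) by auto
  have "card (\<Union>y\<in>?Y. {s. rel_norm s = y}) = (\<Sum>y\<in>?Y. card {s. rel_norm s = y})"
    by (rule card_UN_disjoint) auto
  also have "\<dots> = (\<Sum>y\<in>?Y. 3 ^ m + 1)"
    by (rule sum.cong[OF refl]) (use Y_sub card_subF_and_rel_norm_fiber(2) in blast)
  finally show ?thesis unfolding zeros_rel_norm_form[OF a(1)] using card_Y by simp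
qed

lemma hweight_shifted_rel_norm_form:
  assumes "(a::'a) \<in> subF m" "a \<noteq> 0" "e \<in> F3" "e \<noteq> 0"
  shows "hweight (\<lambda>t. tr (2 * m) (a * rel_norm (t + u)) + e) = min_weight"
proof -
  have "card {t. tr (2 * m) (a * rel_norm (t + u)) + e = 0} = 3 ^ (m - 1) * (3 ^ m + 1)"
    using card_Collect_shift[of "\<lambda>s. tr (2 * m) (a * rel_norm s) + e = 0" u]
      card_zeros_rel_norm_form[OF assms] by simp
  then show ?thesis unfolding hweight_eq_card_zeros using min_weight_eq by simp
qed

lemma card_zeros_codeC_le:
  assumes c: "(c::'a \<Rightarrow> 'a) \<in> codeC m" "c \<noteq> (\<lambda>_. 0)"
  shows "card {t. c t = 0} \<le> 3 ^ (m - 1) * (3 ^ m + 1)"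
proof -
  obtain a b h where c_eq: "c = (\<lambda>t. tr (2 * m) (a * rel_norm t + b * t) + h)"
    and a: "a \<in> subF m" and h: "h \<in> F3"
    using c(1) unfolding codeC_eq by blast
  consider "a = 0" "b = 0" | "a = 0" "b \<noteq> 0" | "a \<noteq> 0" by blast
  then show ?thesis
  proof cases
    case 1
    then have "{t. c t = 0} = {}" using c(2) unfolding c_eq by auto
    then show ?thesis by simp
  next
    case 2
    have "card {t. c t = 0} = card {t. tr (2 * m) (b * t) = - h}"
      unfolding c_eq \<open>a = 0\<close> by (simp add: eq_neg_iff_add_eq_0)
    also have "\<dots> \<le> 3 ^ (2 * m - 1)" using card_tr_eq_le[of "2 * m" b "- h"] 2 two_le_m by simp
    also have "\<dots> = 3 ^ (m - 1) * 3 ^ m"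
      using two_le_m by (simp flip: power_add)
    also have "\<dots> \<le> 3 ^ (m - 1) * (3 ^ m + 1)" by simp
    finally show ?thesis .
  next
    case 3
    obtain u where u: "\<And>t. tr (2 * m) (a * rel_norm t + b * t)
        = tr (2 * m) (a * rel_norm (t + u)) - tr (2 * m) (a * rel_norm u)"
      using tr_rel_norm_complete_square[OF a 3] by blast
    let ?e = "h - tr (2 * m) (a * rel_norm u)"
    have "{t. c t = 0} = {t. tr (2 * m) (a * rel_norm (t + u)) + ?e = 0}"
      unfolding c_eq u by (simp add: algebra_simps)
    then show ?thesis
      using card_zeros_rel_norm_form_le[OF a 3, of ?e]
        card_Collect_shift[of "\<lambda>s. tr (2 * m) (a * rel_norm s) + ?e = 0" u] by simp
  qed
qed

lemma min_weight_le_hweight: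
  assumes "(c::'a \<Rightarrow> 'a) \<in> codeC m" "c \<noteq> (\<lambda>_. 0)"
  shows "min_weight \<le> hweight c"
  unfolding hweight_eq_card_zeros min_weight_eq[symmetric]
  using card_zeros_codeC_le[OF assms] by (rule diff_le_mono2)

lemma dmin_eq_min_weight: "dmin m TYPE('a) = min_weight"
proof -
  let ?c0 = "\<lambda>t::'a. tr (2 * m) (1 * rel_norm (t + 0)) + 1"
  have weight: "hweight ?c0 = min_weight" by (rule hweight_shifted_rel_norm_form) simp_all
  have "?c0 \<noteq> (\<lambda>_. 0)"
  proof
    assume "?c0 = (\<lambda>_. 0)"
    then have "hweight ?c0 = 0" by (simp add: hweight_def)
    then show False using weight min_weight_pos by simp
  qed
  moreover have "?c0 \<in> codeC m" by (rule shifted_rel_norm_form_in_codeC) simp_all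
  ultimately have "min_weight \<in> {hweight c | c :: 'a \<Rightarrow> 'a. c \<in> codeC m \<and> c \<noteq> (\<lambda>_. 0)}"
    using weight by force
  then show ?thesis
    unfolding dmin_def using min_weight_le_hweight by (intro Min_eqI) auto
qed

lemma blocksD_eq: "(blocksD m :: 'a set set) = {supp c | c. c \<in> codeC m \<and> hweight c = min_weight}"
  unfolding blocksD_def dmin_eq_min_weight ..

section \<open>The code spanned by the minimum-weight supports\<close>

abbreviation CD :: "('a \<Rightarrow> 'a) set" where
  "CD \<equiv> codeCD m"

definition qform :: "'a \<Rightarrow> 'a \<Rightarrow> 'a" where
  "qform a t = tr (2 * m) (a * rel_norm t)"

definition lform :: "'a \<Rightarrow> 'a \<Rightarrow> 'a" where
  "lform v t = tr (2 * m) (v * t)"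

lemma F3_subspace_CD: "F3_subspace CD"
  unfolding codeCD_def by (rule F3_subspace_span3)

lemma square_min_weight_word_in_CD:
  assumes "(c::'a \<Rightarrow> 'a) \<in> codeC m" "hweight c = min_weight"
  shows "(\<lambda>t. c t ^ 2) \<in> CD"
proof -
  have "supp c \<in> blocksD m" unfolding blocksD_eq using assms by blast
  then have "incvec (supp c) \<in> CD"
    unfolding codeCD_def by (intro subsetD[OF span3_superset] imageI)
  moreover have "incvec (supp c) = (\<lambda>t. c t ^ 2)"
    by (rule incvec_supp_eq_square) (rule codeC_values_in_F3[OF assms(1)])
  ultimately show ?thesis by simp
qed

lemma qform_shift:
  assumes "a \<in> subF m"
  shows "qform a (t + u) = qform a t + lform (2 * a * u ^ 3 ^ m) t + qform a u"
  unfolding qform_def lform_def tr_rel_norm_shift[OF assms] by simp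

lemma qform_zero [simp]: "qform 0 = (\<lambda>_. 0)"
  unfolding qform_def by (rule ext) simp

lemma qform_in_F3: "qform a t \<in> F3"
  unfolding qform_def by (rule tr_in_F3[OF mem_subF_2m])

lemma qform_uminus_arg: "qform a (- u) = qform a u"
  unfolding qform_def rel_norm_def by (simp add: power_minus_odd)

lemma qform_add: "qform (a + b) t = qform a t + qform b t"
  and qform_diff: "qform (a - b) t = qform a t - qform b t"
  unfolding qform_def by (simp_all add: tr_add tr_diff algebra_simps)

lemma lform_add: "lform (v + w) t = lform v t + lform w t"
  and lform_diff: "lform (v - w) t = lform v t - lform w t"
  and lform_uminus: "lform (- v) t = - lform v t"
  unfolding lform_def by (simp_all add: tr_add tr_diff tr_uminus algebra_simps)

lemma qform_shift_in_CD:
  assumes a: "a \<in> subF m" "a \<noteq> 0"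
  shows "(\<lambda>t. qform a (t + u)) \<in> CD" and "(\<lambda>t. qform a (t + u) ^ 2 + 1) \<in> CD"
proof -
  have sq: "(\<lambda>t. (qform a (t + u) + e) ^ 2) \<in> CD" if "e \<in> F3" "e \<noteq> 0" for e
    unfolding qform_def using a that
    by (intro square_min_weight_word_in_CD shifted_rel_norm_form_in_codeC hweight_shifted_rel_norm_form)
  \<comment> \<open>\<open>(g + 1)\<^sup>2 - (g - 1)\<^sup>2 = 4 g\<close> and \<open>2 ((g + 1)\<^sup>2 + (g - 1)\<^sup>2) = 4 (g\<^sup>2 + 1)\<close>, where \<open>4 = 1\<close>\<close>
  have lin: "(\<lambda>t. qform a (t + u)) = (\<lambda>t. 1 * (qform a (t + u) + 1) ^ 2 + (- 1) * (qform a (t + u) + - 1) ^ 2)"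
  proof
    fix t
    show "qform a (t + u) = 1 * (qform a (t + u) + 1) ^ 2 + (- 1) * (qform a (t + u) + - 1) ^ 2"
      by (rule eq_mod_3[where z = "- qform a (t + u)"]) algebra
  qed
  have quad: "(\<lambda>t. qform a (t + u) ^ 2 + 1) = (\<lambda>t. 2 * (qform a (t + u) + 1) ^ 2 + 2 * (qform a (t + u) + - 1) ^ 2)"
  proof
    fix t
    show "qform a (t + u) ^ 2 + 1 = 2 * (qform a (t + u) + 1) ^ 2 + 2 * (qform a (t + u) + - 1) ^ 2"
      by (rule eq_mod_3[where z = "- (qform a (t + u) ^ 2 + 1)"]) algebra
  qed
  show "(\<lambda>t. qform a (t + u)) \<in> CD"
    unfolding lin by (intro F3_subspace_add F3_subspace_scale F3_subspace_CD sq) simp_all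
  show "(\<lambda>t. qform a (t + u) ^ 2 + 1) \<in> CD"
    unfolding quad by (intro F3_subspace_add F3_subspace_scale F3_subspace_CD sq) simp_all
qed

lemma exists_qform_neq_0: "\<exists>u. qform 1 u \<noteq> 0"
proof -
  have "card {s. tr (2 * m) (1 * rel_norm s) + 0 = 0} \<le> 3 ^ (m - 1) * (3 ^ m + 1)"
    by (rule card_zeros_rel_norm_form_le) simp_all
  also have "\<dots> < 3 ^ (2 * m)" using min_weight_eq min_weight_pos by simp
  finally have "{s. qform 1 s = 0} \<noteq> UNIV" using card_UNIV unfolding qform_def by auto
  then show ?thesis by auto
qed

lemma qform_in_CD: "a \<in> subF m \<Longrightarrow> qform a \<in> CD"
  using qform_shift_in_CD(1)[of a 0] F3_subspace_zero[OF F3_subspace_CD] by (cases "a = 0") auto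

lemma one_in_CD: "(\<lambda>_. 1) \<in> CD"
proof -
  obtain u where u: "qform 1 u \<noteq> 0" using exists_qform_neq_0 by blast
  define c where "c = qform 1 u"
  have c: "c \<in> F3" "c ^ 2 = 1" unfolding c_def using qform_in_F3 F3_square u by auto
  have shift: "qform 1 (t + u) = qform 1 t + lform (2 * u ^ 3 ^ m) t + c"
    "qform 1 (t + - u) = qform 1 t - lform (2 * u ^ 3 ^ m) t + c" for t
    using qform_shift[of 1 t u] qform_shift[of 1 t "- u"]
    by (simp_all add: c_def qform_uminus_arg power_minus_odd lform_uminus)
  \<comment> \<open>the three shifts add up to \<open>3 Q + 2 c = 2 c\<close>, and \<open>(2 c)\<^sup>2 = 1\<close>\<close>
  have "(\<lambda>_. 1) = (\<lambda>t. 2 * c * qform 1 (t + u) + (2 * c * qform 1 (t + - u) + 2 * c * qform 1 t))"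
  proof
    fix t
    have "2 * c * qform 1 (t + u) + (2 * c * qform 1 (t + - u) + 2 * c * qform 1 t)
        = c ^ 2 + 3 * (c ^ 2 + 2 * c * qform 1 t)"
      unfolding shift by algebra
    then show "1 = 2 * c * qform 1 (t + u) + (2 * c * qform 1 (t + - u) + 2 * c * qform 1 t)"
      using c(2) three_eq_0 by simp
  qed
  also have "\<dots> \<in> CD"
    using c(1) by (intro F3_subspace_add F3_subspace_scale F3_subspace_CD qform_shift_in_CD
        qform_in_CD F3_mult) simp_all
  finally show ?thesis .
qed

lemma lform_in_CD: "lform v \<in> CD"
proof -
  obtain u where u: "u ^ 3 ^ m = v / 2" using frobenius_surj by blast
  have "lform v = (\<lambda>t. qform 1 (t + u) + (- 1 * qform 1 (t + 0) + - qform 1 u * 1))"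
  proof
    fix t
    have "2 * 1 * u ^ 3 ^ m = v" unfolding mult_1_right u using two_neq_0 by simp
    then show "lform v t = qform 1 (t + u) + (- 1 * qform 1 (t + 0) + - qform 1 u * 1)"
      using qform_shift[of 1 t u] by simp
  qed
  also have "\<dots> \<in> CD"
    by (intro F3_subspace_add F3_subspace_scale F3_subspace_CD qform_shift_in_CD one_in_CD
        F3_uminus qform_in_F3) simp_all
  finally show ?thesis .
qed

lemma qform_square_in_CD:
  assumes "a \<in> subF m"
  shows "(\<lambda>t. qform a t ^ 2) \<in> CD"
proof (cases "a = 0")
  case False
  have "(\<lambda>t. qform a t ^ 2) = (\<lambda>t. (qform a (t + 0) ^ 2 + 1) + - 1 * 1)" by simp
  also have "\<dots> \<in> CD"
    using assms False
    by (intro F3_subspace_add F3_subspace_scale F3_subspace_CD qform_shift_in_CD one_in_CD) simp_all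
  finally show ?thesis .
qed (use F3_subspace_zero[OF F3_subspace_CD] in simp)

lemma lform_square_plus_cross_in_CD:
  assumes a: "a \<in> subF m" "a \<noteq> 0"
  shows "(\<lambda>t. lform (2 * a * u ^ 3 ^ m) t ^ 2 + 2 * qform a t * lform (2 * a * u ^ 3 ^ m) t) \<in> CD"
proof -
  define c where "c = qform a u"
  let ?L = "lform (2 * a * u ^ 3 ^ m)"
  have c: "c \<in> F3" unfolding c_def by (rule qform_in_F3)
  have "(\<lambda>t. ?L t ^ 2 + 2 * qform a t * ?L t) = (\<lambda>t. (qform a (t + u) ^ 2 + 1) +
      (- 1 * qform a t ^ 2 + (- (2 * c) * qform a t + (- (2 * c) * ?L t + - (c * c + 1) * 1))))"
  proof
    fix t
    show "?L t ^ 2 + 2 * qform a t * ?L t = (qform a (t + u) ^ 2 + 1) +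
      (- 1 * qform a t ^ 2 + (- (2 * c) * qform a t + (- (2 * c) * ?L t + - (c * c + 1) * 1)))"
      unfolding c_def qform_shift[OF a(1)] by algebra
  qed
  also have "\<dots> \<in> CD"
    using a c by (intro F3_subspace_add F3_subspace_scale F3_subspace_CD qform_shift_in_CD
        qform_square_in_CD qform_in_CD lform_in_CD one_in_CD F3_uminus F3_mult F3_add) simp_all
  finally show ?thesis .
qed

lemma lform_square_and_qform_mult_lform_in_CD:
  assumes a: "a \<in> subF m" "a \<noteq> 0"
  shows "(\<lambda>t. lform v t ^ 2) \<in> CD" and "(\<lambda>t. qform a t * lform v t) \<in> CD"
proof -
  obtain u where "u ^ 3 ^ m = v / (2 * a)" using frobenius_surj by blast
  then have v: "2 * a * u ^ 3 ^ m = v" "2 * a * (- u) ^ 3 ^ m = - v"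
    using two_neq_0 a(2) by (simp_all add: power_minus_odd)
  \<comment> \<open>replacing \<open>u\<close> by \<open>-u\<close> flips the sign of the cross term\<close>
  let ?h1 = "\<lambda>t. lform v t ^ 2 + 2 * qform a t * lform v t"
  let ?h2 = "\<lambda>t. lform (- v) t ^ 2 + 2 * qform a t * lform (- v) t"
  have h: "?h1 \<in> CD" "?h2 \<in> CD"
    using lform_square_plus_cross_in_CD[OF a, of u] lform_square_plus_cross_in_CD[OF a, of "- u"]
    unfolding v by simp_all
  have "(\<lambda>t. lform v t ^ 2) = (\<lambda>t. 2 * ?h1 t + 2 * ?h2 t)"
  proof
    fix t show "lform v t ^ 2 = 2 * ?h1 t + 2 * ?h2 t"
      unfolding lform_uminus by (rule eq_mod_3[where z = "- (lform v t ^ 2)"]) algebra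
  qed
  also have "\<dots> \<in> CD" by (intro h F3_subspace_add F3_subspace_scale F3_subspace_CD) simp_all
  finally show "(\<lambda>t. lform v t ^ 2) \<in> CD" .
  have "(\<lambda>t. qform a t * lform v t) = (\<lambda>t. 1 * ?h1 t + - 1 * ?h2 t)"
  proof
    fix t show "qform a t * lform v t = 1 * ?h1 t + - 1 * ?h2 t"
      unfolding lform_uminus by (rule eq_mod_3[where z = "- (qform a t * lform v t)"]) algebra
  qed
  also have "\<dots> \<in> CD" by (intro h F3_subspace_add F3_subspace_scale F3_subspace_CD) simp_all
  finally show "(\<lambda>t. qform a t * lform v t) \<in> CD" .
qed

lemma qform_mult_lform_in_CD: "a \<in> subF m \<Longrightarrow> (\<lambda>t. qform a t * lform v t) \<in> CD"
  using lform_square_and_qform_mult_lform_in_CD(2) F3_subspace_zero[OF F3_subspace_CD]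
  by (cases "a = 0") auto

lemma lform_mult_lform_in_CD: "(\<lambda>t. lform v t * lform w t) \<in> CD"
proof -
  have "(\<lambda>t. lform v t * lform w t) = (\<lambda>t. 1 * lform (v + w) t ^ 2 + - 1 * lform (v - w) t ^ 2)"
  proof
    fix t show "lform v t * lform w t = 1 * lform (v + w) t ^ 2 + - 1 * lform (v - w) t ^ 2"
      unfolding lform_add lform_diff by (rule eq_mod_3[where z = "- (lform v t * lform w t)"]) algebra
  qed
  also have "\<dots> \<in> CD"
    by (intro F3_subspace_add F3_subspace_scale F3_subspace_CD
        lform_square_and_qform_mult_lform_in_CD(1)[OF one_in_subF]) simp_all
  finally show ?thesis .
qed

lemma qform_mult_qform_in_CD:
  assumes "a \<in> subF m" "b \<in> subF m"
  shows "(\<lambda>t. qform a t * qform b t) \<in> CD"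
proof -
  have "(\<lambda>t. qform a t * qform b t) = (\<lambda>t. 1 * qform (a + b) t ^ 2 + - 1 * qform (a - b) t ^ 2)"
  proof
    fix t show "qform a t * qform b t = 1 * qform (a + b) t ^ 2 + - 1 * qform (a - b) t ^ 2"
      unfolding qform_add qform_diff by (rule eq_mod_3[where z = "- (qform a t * qform b t)"]) algebra
  qed
  also have "\<dots> \<in> CD"
    using assms by (intro F3_subspace_add F3_subspace_scale F3_subspace_CD qform_square_in_CD
        subF_add subF_diff) simp_all
  finally show ?thesis .
qed

lemma rel_norm_power_mult: "rel_norm t ^ 3 ^ j * t = t ^ ((3 ^ m + 1) * 3 ^ j + 1)"
  unfolding rel_norm_def by (simp only: power_add power_one_right power_mult)

lemma rel_norm_mult_power: "rel_norm t * rel_norm t ^ 3 ^ j = t ^ ((3 ^ m + 1) * (3 ^ j + 1))"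
proof -
  have "(3 ^ m + 1) * (3 ^ j + 1) = (3 ^ m + 1) + (3 ^ m + 1) * (3::nat) ^ j" by (simp add: algebra_simps)
  then show ?thesis unfolding rel_norm_def by (simp only: power_add power_mult)
qed

lemma lform_mult_lform_expand:
  "lform v t * lform w t = (\<Sum>j<2 * m. tr (2 * m) (v * w ^ 3 ^ j * t ^ (3 ^ j + 1)))"
proof -
  have "lform v t * lform w t = (\<Sum>j<2 * m. tr (2 * m) ((v * t) * (w * t) ^ 3 ^ j))"
    unfolding lform_def by (rule tr_mult_tr) simp_all
  also have "\<dots> = (\<Sum>j<2 * m. tr (2 * m) (v * w ^ 3 ^ j * t ^ (3 ^ j + 1)))"
    by (rule sum.cong) (simp_all add: power_mult_distrib power_add mult_ac)
  finally show ?thesis .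
qed

lemma qform_mult_lform_expand:
  assumes a: "a \<in> subF m"
  shows "qform a t * lform v t = (\<Sum>j<m. tr (2 * m) (2 * v * a ^ 3 ^ j * t ^ ((3 ^ m + 1) * 3 ^ j + 1)))"
proof -
  let ?f = "\<lambda>j. tr (2 * m) ((v * t) * (a * rel_norm t) ^ 3 ^ j)"
  have aN: "a * rel_norm t \<in> subF m" using a rel_norm_in_subF by (rule subF_mult)
  have "qform a t * lform v t = lform v t * qform a t" by (rule mult.commute)
  also have "\<dots> = (\<Sum>j<2 * m. ?f j)"
    unfolding qform_def lform_def by (rule tr_mult_tr) simp_all
  also have "\<dots> = (\<Sum>j<m. ?f j) + (\<Sum>j<m. ?f (m + j))"
    unfolding mult_2 by (rule sum_lessThan_add)
  \<comment> \<open>the terms \<open>j\<close> and \<open>m + j\<close> coincide since \<open>a N(t)\<close> lies in the subfield\<close>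
  also have "(\<Sum>j<m. ?f (m + j)) = (\<Sum>j<m. ?f j)" by (simp only: subF_power_3_add[OF aN])
  also have "(\<Sum>j<m. ?f j) + (\<Sum>j<m. ?f j) = (\<Sum>j<m. 2 * ?f j)"
    by (simp only: sum.distrib[symmetric] mult_2)
  also have "\<dots> = (\<Sum>j<m. tr (2 * m) (2 * v * a ^ 3 ^ j * t ^ ((3 ^ m + 1) * 3 ^ j + 1)))"
  proof (rule sum.cong[OF refl])
    fix j
    have "2 * ((v * t) * (a * rel_norm t) ^ 3 ^ j) = 2 * v * a ^ 3 ^ j * t ^ ((3 ^ m + 1) * 3 ^ j + 1)"
      unfolding rel_norm_power_mult[symmetric] by (simp add: power_mult_distrib mult_ac)
    then have "tr (2 * m) (2 * ((v * t) * (a * rel_norm t) ^ 3 ^ j))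
        = tr (2 * m) (2 * v * a ^ 3 ^ j * t ^ ((3 ^ m + 1) * 3 ^ j + 1))" by (rule arg_cong)
    then show "2 * ?f j = tr (2 * m) (2 * v * a ^ 3 ^ j * t ^ ((3 ^ m + 1) * 3 ^ j + 1))"
      by (simp only: tr_mult_F3[OF numeral_in_F3])
  qed
  finally show ?thesis .
qed

lemma qform_mult_qform_expand:
  assumes x: "x \<in> subF m" and y: "y \<in> subF m"
  shows "qform x t * qform y t = (\<Sum>j<m. tr m (x * y ^ 3 ^ j * t ^ ((3 ^ m + 1) * (3 ^ j + 1))))"
proof -
  have xN: "x * rel_norm t \<in> subF m" and yN: "y * rel_norm t \<in> subF m"
    using x y rel_norm_in_subF by (auto intro: subF_mult)
  have "qform x t * qform y t = 4 * (tr m (x * rel_norm t) * tr m (y * rel_norm t))"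
    unfolding qform_def tr_double[OF xN] tr_double[OF yN] by simp
  also have "\<dots> = tr m (x * rel_norm t) * tr m (y * rel_norm t)"
    by (rule eq_mod_3[where z = "tr m (x * rel_norm t) * tr m (y * rel_norm t)"]) simp
  also have "\<dots> = (\<Sum>j<m. tr m ((x * rel_norm t) * (y * rel_norm t) ^ 3 ^ j))"
    using xN yN by (rule tr_mult_tr)
  also have "\<dots> = (\<Sum>j<m. tr m (x * y ^ 3 ^ j * t ^ ((3 ^ m + 1) * (3 ^ j + 1))))"
  proof (rule sum.cong[OF refl])
    fix j
    have "(x * rel_norm t) * (y * rel_norm t) ^ 3 ^ j = x * y ^ 3 ^ j * t ^ ((3 ^ m + 1) * (3 ^ j + 1))"
      unfolding rel_norm_mult_power[symmetric] by (simp add: power_mult_distrib mult_ac)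
    then show "tr m ((x * rel_norm t) * (y * rel_norm t) ^ 3 ^ j)
        = tr m (x * y ^ 3 ^ j * t ^ ((3 ^ m + 1) * (3 ^ j + 1)))" by (rule arg_cong)
  qed
  finally show ?thesis .
qed

lemma tr_power_3_plus_1_in_CD:
  assumes k: "k < 2 * m"
  shows "(\<lambda>t. tr (2 * m) (b * t ^ (3 ^ k + 1))) \<in> CD"
proof -
  let ?E = "3 ^ (2 * m) - 1 - 3 ^ k"
  \<comment> \<open>orthogonality of the characters \<open>w \<mapsto> w\<^sup>e\<close> picks out the \<open>k\<close>-th term\<close>
  have "(\<lambda>t. tr (2 * m) (b * t ^ (3 ^ k + 1)))
      = (\<lambda>t. - 1 * (\<Sum>w\<in>subF (2 * m). lform (b * w ^ ?E) t * lform w t))"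
  proof
    fix t
    have "(\<Sum>w\<in>subF (2 * m). lform (b * w ^ ?E) t * lform w t)
        = (\<Sum>w\<in>subF (2 * m). \<Sum>j<2 * m. tr (2 * m) (b * w ^ ?E * w ^ 3 ^ j * t ^ (3 ^ j + 1)))"
      by (simp only: lform_mult_lform_expand)
    also have "\<dots> = - tr (2 * m) (b * t ^ (3 ^ k + 1))"
      by (rule sum_tr_orthogonality[OF card_subF_2m k])
    finally show "tr (2 * m) (b * t ^ (3 ^ k + 1))
        = - 1 * (\<Sum>w\<in>subF (2 * m). lform (b * w ^ ?E) t * lform w t)" by simp
  qed
  also have "\<dots> \<in> CD"
    by (intro F3_subspace_scale F3_subspace_sum F3_subspace_CD lform_mult_lform_in_CD) simp_all
  finally show ?thesis .
qed

lemma tr_power_norm_3_plus_1_in_CD: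
  assumes i: "i < m"
  shows "(\<lambda>t. tr (2 * m) (\<beta> * t ^ ((3 ^ m + 1) * 3 ^ i + 1))) \<in> CD"
proof -
  let ?E = "3 ^ m - 1 - 3 ^ i"
  have "(\<lambda>t. tr (2 * m) (\<beta> * t ^ ((3 ^ m + 1) * 3 ^ i + 1)))
      = (\<lambda>t. \<Sum>a\<in>subF m. qform a t * lform (\<beta> * a ^ ?E) t)"
  proof
    fix t
    have "(\<Sum>a\<in>subF m. qform a t * lform (\<beta> * a ^ ?E) t)
        = (\<Sum>a\<in>subF m. \<Sum>j<m. tr (2 * m) (2 * \<beta> * a ^ ?E * a ^ 3 ^ j * t ^ ((3 ^ m + 1) * 3 ^ j + 1)))"
      by (rule sum.cong[OF refl]) (simp add: qform_mult_lform_expand mult.assoc)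
    also have "\<dots> = - tr (2 * m) (2 * \<beta> * t ^ ((3 ^ m + 1) * 3 ^ i + 1))"
      by (rule sum_tr_orthogonality[OF card_subF i])
    also have "\<dots> = tr (2 * m) (\<beta> * t ^ ((3 ^ m + 1) * 3 ^ i + 1))"
      by (simp add: mult.assoc tr_mult_F3 uminus_two_mult)
    finally show "tr (2 * m) (\<beta> * t ^ ((3 ^ m + 1) * 3 ^ i + 1))
        = (\<Sum>a\<in>subF m. qform a t * lform (\<beta> * a ^ ?E) t)" by simp
  qed
  also have "\<dots> \<in> CD"
    by (intro F3_subspace_sum F3_subspace_CD qform_mult_lform_in_CD) simp_all
  finally show ?thesis .
qed

lemma tr_m_power_norm_times_3_plus_1_in_CD:
  assumes i: "i < m" and c: "c \<in> subF m"
  shows "(\<lambda>t. tr m (c * t ^ ((3 ^ m + 1) * (3 ^ i + 1)))) \<in> CD"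
proof -
  let ?E = "3 ^ m - 1 - 3 ^ i"
  have coeff: "- c * a ^ ?E \<in> subF m" if "a \<in> subF m" for a
    using c that by (intro subF_mult subF_uminus subF_power)
  have "(\<lambda>t. tr m (c * t ^ ((3 ^ m + 1) * (3 ^ i + 1))))
      = (\<lambda>t. \<Sum>a\<in>subF m. qform (- c * a ^ ?E) t * qform a t)"
  proof
    fix t
    have "(\<Sum>a\<in>subF m. qform (- c * a ^ ?E) t * qform a t)
        = (\<Sum>a\<in>subF m. \<Sum>j<m. tr m (- c * a ^ ?E * a ^ 3 ^ j * t ^ ((3 ^ m + 1) * (3 ^ j + 1))))"
      by (rule sum.cong[OF refl]) (rule qform_mult_qform_expand[OF coeff])
    also have "\<dots> = - tr m (- c * t ^ ((3 ^ m + 1) * (3 ^ i + 1)))"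
      by (rule sum_tr_orthogonality[OF card_subF i])
    finally show "tr m (c * t ^ ((3 ^ m + 1) * (3 ^ i + 1)))
        = (\<Sum>a\<in>subF m. qform (- c * a ^ ?E) t * qform a t)" by (simp add: tr_uminus)
  qed
  also have "\<dots> \<in> CD"
    using coeff by (intro F3_subspace_sum F3_subspace_CD qform_mult_qform_in_CD) simp_all
  finally show ?thesis .
qed

section \<open>The explicit code\<close>

abbreviation CE :: "('a \<Rightarrow> 'a) set" where
  "CE \<equiv> codeE m"

definition codeE_word :: "(nat \<Rightarrow> 'a) \<Rightarrow> (nat \<Rightarrow> 'a) \<Rightarrow> (nat \<Rightarrow> 'a) \<Rightarrow> 'a \<Rightarrow> 'a \<Rightarrow> 'a \<Rightarrow> 'a" where
  "codeE_word bb bb' cc b h = (\<lambda>t. (\<Sum>i<m. tr (2 * m) (bb i * t ^ ((3 ^ m + 1) * 3 ^ i + 1)))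
     + (\<Sum>i<2 * m. tr (2 * m) (bb' i * t ^ (3 ^ i + 1)))
     + (\<Sum>i<m. tr m (cc i * t ^ ((3 ^ m + 1) * (3 ^ i + 1))))
     + tr (2 * m) (b * t) + h)"

lemma codeE_wordI: "\<forall>i. cc i \<in> subF m \<Longrightarrow> h \<in> F3 \<Longrightarrow> codeE_word bb bb' cc b h \<in> CE"
  unfolding codeE_def codeE_word_def by blast

lemma codeE_wordE:
  assumes "f \<in> CE"
  obtains bb bb' cc b h where "\<forall>i. cc i \<in> subF m" "h \<in> F3" "f = codeE_word bb bb' cc b h"
  using assms unfolding codeE_def codeE_word_def by blast

lemma F3_subspace_CE: "F3_subspace CE"
  unfolding F3_subspace_def
proof (intro conjI ballI)
  have "(\<lambda>_. 0) = codeE_word (\<lambda>_. 0) (\<lambda>_. 0) (\<lambda>_. 0) 0 0"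
    unfolding codeE_word_def by simp
  then show "(\<lambda>_. 0) \<in> CE" by (simp add: codeE_wordI)
next
  fix f g assume "f \<in> CE" "g \<in> CE"
  obtain bb1 bb1' cc1 b1 h1 where
    f: "\<forall>i. cc1 i \<in> subF m" "h1 \<in> F3" "f = codeE_word bb1 bb1' cc1 b1 h1"
    using \<open>f \<in> CE\<close> by (rule codeE_wordE)
  obtain bb2 bb2' cc2 b2 h2 where
    g: "\<forall>i. cc2 i \<in> subF m" "h2 \<in> F3" "g = codeE_word bb2 bb2' cc2 b2 h2"
    using \<open>g \<in> CE\<close> by (rule codeE_wordE)
  have "(\<lambda>t. f t + g t) = codeE_word (\<lambda>i. bb1 i + bb2 i) (\<lambda>i. bb1' i + bb2' i) (\<lambda>i. cc1 i + cc2 i)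
      (b1 + b2) (h1 + h2)"
    unfolding f(3) g(3) codeE_word_def by (simp add: tr_add distrib_right sum.distrib algebra_simps)
  then show "(\<lambda>t. f t + g t) \<in> CE" using f g by (simp add: codeE_wordI subF_add F3_add)
next
  fix k :: 'a and f assume k: "k \<in> F3" and "f \<in> CE"
  obtain bb bb' cc b h where f: "\<forall>i. cc i \<in> subF m" "h \<in> F3" "f = codeE_word bb bb' cc b h"
    using \<open>f \<in> CE\<close> by (rule codeE_wordE)
  have "(\<lambda>t. k * f t) = codeE_word (\<lambda>i. k * bb i) (\<lambda>i. k * bb' i) (\<lambda>i. k * cc i) (k * b) (k * h)"
    unfolding f(3) codeE_word_def
    by (simp add: tr_mult_F3[OF k, symmetric] mult.assoc sum_distrib_left distrib_left)
  moreover have "\<forall>i. k * cc i \<in> subF m" using F3_subset_subF k f(1) by (blast intro: subF_mult)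
  ultimately show "(\<lambda>t. k * f t) \<in> CE" using f(2) k by (simp add: codeE_wordI F3_mult)
qed

lemma tr_power_norm_3_plus_1_in_CE:
  assumes "i < m"
  shows "(\<lambda>t. tr (2 * m) (\<beta> * t ^ ((3 ^ m + 1) * 3 ^ i + 1))) \<in> CE"
proof -
  have "(\<lambda>t. tr (2 * m) (\<beta> * t ^ ((3 ^ m + 1) * 3 ^ i + 1)))
      = codeE_word (\<lambda>j. if j = i then \<beta> else 0) (\<lambda>_. 0) (\<lambda>_. 0) 0 0"
    unfolding codeE_word_def sum_tr_delta[OF assms] by simp
  then show ?thesis by (simp add: codeE_wordI)
qed

lemma tr_power_3_plus_1_in_CE:
  assumes "k < 2 * m"
  shows "(\<lambda>t. tr (2 * m) (b * t ^ (3 ^ k + 1))) \<in> CE"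
proof -
  have "(\<lambda>t. tr (2 * m) (b * t ^ (3 ^ k + 1)))
      = codeE_word (\<lambda>_. 0) (\<lambda>j. if j = k then b else 0) (\<lambda>_. 0) 0 0"
    unfolding codeE_word_def sum_tr_delta[OF assms] by simp
  then show ?thesis by (simp add: codeE_wordI)
qed

lemma tr_m_power_norm_times_3_plus_1_in_CE:
  assumes "i < m" "c \<in> subF m"
  shows "(\<lambda>t. tr m (c * t ^ ((3 ^ m + 1) * (3 ^ i + 1)))) \<in> CE"
proof -
  have "(\<lambda>t. tr m (c * t ^ ((3 ^ m + 1) * (3 ^ i + 1))))
      = codeE_word (\<lambda>_. 0) (\<lambda>_. 0) (\<lambda>j. if j = i then c else 0) 0 0"
    unfolding codeE_word_def sum_tr_delta[OF assms(1)] by simp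
  then show ?thesis using assms(2) by (simp add: codeE_wordI)
qed

lemma lform_in_CE: "lform b \<in> CE"
proof -
  have "lform b = codeE_word (\<lambda>_. 0) (\<lambda>_. 0) (\<lambda>_. 0) b 0"
    unfolding codeE_word_def lform_def by simp
  then show ?thesis by (simp add: codeE_wordI)
qed

lemma const_in_CE: "h \<in> F3 \<Longrightarrow> (\<lambda>_. h) \<in> CE"
  using codeE_wordI[of "\<lambda>_. 0" h "\<lambda>_. 0" "\<lambda>_. 0" 0] by (simp add: codeE_word_def)

lemma qform_in_CE: "qform a \<in> CE"
proof -
  have "qform a = (\<lambda>t. tr (2 * m) (a * t ^ (3 ^ m + 1)))"
    by (rule ext) (simp only: qform_def rel_norm_def)
  moreover have "m < 2 * m" using two_le_m by simp
  ultimately show ?thesis using tr_power_3_plus_1_in_CE by simp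
qed

lemma square_codeC_in_CE:
  assumes "c \<in> codeC m"
  shows "(\<lambda>t. c t ^ 2) \<in> CE"
proof -
  obtain a b h where c: "c = (\<lambda>t. qform a t + lform b t + h)" and a: "a \<in> subF m" and h: "h \<in> F3"
    using assms unfolding codeC_eq qform_def lform_def by (auto simp: tr_add)
  have "(\<lambda>t. c t ^ 2) = (\<lambda>t. (\<Sum>j<m. tr m (a * a ^ 3 ^ j * t ^ ((3 ^ m + 1) * (3 ^ j + 1))))
      + ((\<Sum>j<2 * m. tr (2 * m) (b * b ^ 3 ^ j * t ^ (3 ^ j + 1)))
      + (2 * (\<Sum>j<m. tr (2 * m) (2 * b * a ^ 3 ^ j * t ^ ((3 ^ m + 1) * 3 ^ j + 1)))
      + ((2 * h) * qform a t + ((2 * h) * lform b t + (h * h) * 1)))))"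
    unfolding c qform_mult_qform_expand[OF a a, symmetric] lform_mult_lform_expand[symmetric]
      qform_mult_lform_expand[OF a, symmetric]
    by (rule ext) algebra
  also have "\<dots> \<in> CE"
    using a h by (intro F3_subspace_add F3_subspace_scale F3_subspace_sum F3_subspace_CE
        tr_m_power_norm_times_3_plus_1_in_CE tr_power_3_plus_1_in_CE tr_power_norm_3_plus_1_in_CE qform_in_CE lform_in_CE
        const_in_CE F3_mult subF_mult subF_power) simp_all
  finally show ?thesis .
qed

lemma CD_subset_CE: "CD \<subseteq> CE"
  unfolding codeCD_def
proof (rule span3_minimal[OF F3_subspace_CE], rule subsetI)
  fix v :: "'a \<Rightarrow> 'a" assume "v \<in> incvec ` blocksD m"
  then obtain B where B: "B \<in> blocksD m" "v = incvec B" by blast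
  obtain c where c: "c \<in> codeC m" "B = supp c" using B(1) unfolding blocksD_eq by blast
  have "v = (\<lambda>t. c t ^ 2)"
    unfolding B(2) c(2) by (rule incvec_supp_eq_square) (rule codeC_values_in_F3[OF c(1)])
  then show "v \<in> CE" using square_codeC_in_CE[OF c(1)] by simp
qed

lemma CE_subset_CD: "CE \<subseteq> CD"
proof
  fix f assume "f \<in> CE"
  then obtain bb bb' cc b h where f: "\<forall>i. cc i \<in> subF m" "h \<in> F3" "f = codeE_word bb bb' cc b h"
    by (rule codeE_wordE)
  have "f = (\<lambda>t. (\<Sum>i<m. tr (2 * m) (bb i * t ^ ((3 ^ m + 1) * 3 ^ i + 1)))
     + (\<Sum>i<2 * m. tr (2 * m) (bb' i * t ^ (3 ^ i + 1)))
     + (\<Sum>i<m. tr m (cc i * t ^ ((3 ^ m + 1) * (3 ^ i + 1))))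
     + lform b t + h * 1)"
    unfolding f(3) codeE_word_def lform_def by simp
  also have "\<dots> \<in> CD"
    using f(1,2) by (intro F3_subspace_add F3_subspace_scale F3_subspace_sum F3_subspace_CD
        tr_power_norm_3_plus_1_in_CD tr_power_3_plus_1_in_CD tr_m_power_norm_times_3_plus_1_in_CD lform_in_CD one_in_CD) simp_all
  finally show "f \<in> CD" .
qed

section \<open>Affine invariance and the design property\<close>

lemma bij_affine: "(s1::'a) \<noteq> 0 \<Longrightarrow> bij (\<lambda>t. s1 * t + s2)"
  by (rule bij_betw_byWitness[where f' = "\<lambda>t. (t - s2) / s1"]) (auto simp: field_simps)

lemma hweight_comp_bij: "bij \<sigma> \<Longrightarrow> hweight (\<lambda>t. c (\<sigma> t)) = hweight (c :: 'a \<Rightarrow> 'a)"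
  unfolding hweight_def
  by (rule bij_betw_same_card[of \<sigma>]) (auto simp: bij_betw_def bij_def inj_on_def intro: inj_on_subset)

lemma codeC_affine:
  assumes c: "(c::'a \<Rightarrow> 'a) \<in> codeC m" and s1: "s1 \<noteq> 0"
  shows "(\<lambda>t. c (s1 * t + s2)) \<in> codeC m"
proof -
  obtain a b h where c_eq: "c = (\<lambda>t. tr (2 * m) (a * rel_norm t + b * t) + h)"
    and a: "a \<in> subF m" and h: "h \<in> F3"
    using c unfolding codeC_eq by blast
  define u where "u = s2 / s1"
  define a' where "a' = a * rel_norm s1"
  have a': "a' \<in> subF m" unfolding a'_def using a rel_norm_in_subF by (rule subF_mult)
  have su: "s1 * u = s2" unfolding u_def using s1 by simp
  have affine: "s1 * t + s2 = s1 * (t + u)" for t using su by (simp add: algebra_simps)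
  have "(\<lambda>t. c (s1 * t + s2))
      = (\<lambda>t. tr (2 * m) (a' * rel_norm (t + u)) + tr (2 * m) (b * s1 * t) + (tr (2 * m) (b * s2) + h))"
    unfolding c_eq affine a'_def rel_norm_mult by (simp add: tr_add algebra_simps flip: su)
  also have "\<dots> = (\<lambda>t. tr (2 * m) (a' * rel_norm t + (2 * a' * u ^ 3 ^ m + b * s1) * t)
      + (tr (2 * m) (a' * rel_norm u) + tr (2 * m) (b * s2) + h))"
    unfolding tr_rel_norm_shift[OF a'] by (simp add: tr_add algebra_simps)
  also have "\<dots> \<in> codeC m"
    using a' h by (intro codeC_wordI F3_add tr_in_F3[OF mem_subF_2m])
  finally show ?thesis .
qed

lemma codeCD_affine:
  assumes c: "c \<in> CD" and s1: "s1 \<noteq> 0"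
  shows "(\<lambda>t. c (s1 * t + s2)) \<in> CD"
  using _ c unfolding codeCD_def
proof (rule span3_compose)
  fix v :: "'a \<Rightarrow> 'a" assume "v \<in> incvec ` blocksD m"
  then obtain c0 where c0: "c0 \<in> codeC m" "hweight c0 = min_weight" "v = incvec (supp c0)"
    unfolding blocksD_eq by blast
  let ?c1 = "\<lambda>t. c0 (s1 * t + s2)"
  have "?c1 \<in> codeC m" by (rule codeC_affine[OF c0(1) s1])
  moreover have "hweight ?c1 = min_weight" using hweight_comp_bij[OF bij_affine[OF s1]] c0(2) by simp
  ultimately have "supp ?c1 \<in> blocksD m" unfolding blocksD_eq by blast
  moreover have "(\<lambda>t. v (s1 * t + s2)) = incvec (supp ?c1)"
    unfolding c0(3) incvec_def supp_def by simp
  ultimately show "(\<lambda>t. v (s1 * t + s2)) \<in> span3 (incvec ` blocksD m)"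
    using span3_superset by blast
qed

definition weight_blocks :: "nat \<Rightarrow> 'a set set" where
  "weight_blocks w = {supp c | c. c \<in> CD \<and> hweight c = w}"

lemma weight_blocks_affine:
  assumes B: "B \<in> weight_blocks w" and s1: "s1 \<noteq> 0"
  shows "(\<lambda>t. s1 * t + s2) -` B \<in> weight_blocks w"
proof -
  obtain c where c: "B = supp c" "c \<in> CD" "hweight c = w"
    using B unfolding weight_blocks_def by blast
  let ?c1 = "\<lambda>t. c (s1 * t + s2)"
  have "?c1 \<in> CD" by (rule codeCD_affine[OF c(2) s1])
  moreover have "hweight ?c1 = w" using hweight_comp_bij[OF bij_affine[OF s1]] c(3) by simp
  moreover have "supp ?c1 = (\<lambda>t. s1 * t + s2) -` B" unfolding c(1) supp_def by auto
  ultimately show ?thesis unfolding weight_blocks_def by blast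
qed

lemma card_weight_blocks_through_pair:
  assumes T: "card (T :: 'a set) = 2"
  shows "card {B \<in> weight_blocks w. T \<subseteq> B} = card {B \<in> weight_blocks w. {0, 1} \<subseteq> B}"
proof -
  obtain x y where T_eq: "T = {x, y}" "x \<noteq> y" using T by (auto simp: card_2_iff)
  define s where "s = y - x"
  have s: "s \<noteq> 0" "inverse s \<noteq> 0" unfolding s_def using T_eq(2) by simp_all
  let ?\<sigma> = "\<lambda>t. s * t + x" and ?\<tau> = "\<lambda>t. inverse s * t + - x / s"
  \<comment> \<open>\<open>\<sigma>\<close> maps \<open>{0, 1}\<close> onto \<open>T\<close>; preimages under \<open>\<sigma>\<close> and \<open>\<tau> = \<sigma>\<^sup>-\<^sup>1\<close> match the two families\<close>
  have \<sigma>\<tau>: "?\<sigma> (?\<tau> t) = t" "?\<tau> (?\<sigma> t) = t" for t using s by (simp_all add: field_simps)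
  have "?\<tau> t = (t - x) / s" for t by (simp add: divide_inverse algebra_simps)
  then have \<tau>_T: "?\<tau> x = 0" "?\<tau> y = 1" using s(1) unfolding s_def by simp_all
  have "bij_betw (\<lambda>B. ?\<sigma> -` B) {B \<in> weight_blocks w. T \<subseteq> B} {B \<in> weight_blocks w. {0, 1} \<subseteq> B}"
  proof (rule bij_betw_byWitness[where f' = "\<lambda>B. ?\<tau> -` B"])
    show "\<forall>B\<in>{B \<in> weight_blocks w. T \<subseteq> B}. ?\<tau> -` (?\<sigma> -` B) = B" using \<sigma>\<tau> by auto
    show "\<forall>B\<in>{B \<in> weight_blocks w. {0, 1} \<subseteq> B}. ?\<sigma> -` (?\<tau> -` B) = B" using \<sigma>\<tau> by auto
    show "(\<lambda>B. ?\<sigma> -` B) ` {B \<in> weight_blocks w. T \<subseteq> B} \<subseteq> {B \<in> weight_blocks w. {0, 1} \<subseteq> B}"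
      using weight_blocks_affine[OF _ s(1), of _ w x] T_eq(1) unfolding s_def by auto
    show "(\<lambda>B. ?\<tau> -` B) ` {B \<in> weight_blocks w. {0, 1} \<subseteq> B} \<subseteq> {B \<in> weight_blocks w. T \<subseteq> B}"
      using weight_blocks_affine[OF _ s(2), of _ w "- x / s"] T_eq(1) \<tau>_T by auto
  qed
  then show ?thesis by (rule bij_betw_same_card)
qed

end

theorem theorem3p15:
  fixes m :: nat
  assumes "m \<ge> 2"
    and "card (UNIV :: 'a set) = 3 ^ (2*m)"
  shows "(codeCD m :: ('a \<Rightarrow> 'a) set) = codeE m
    \<and> (\<forall>s1 s2 c. s1 \<noteq> (0::'a::{field,finite}) \<longrightarrow> c \<in> (codeCD m :: ('a \<Rightarrow> 'a) set)
          \<longrightarrow> (\<lambda>t. c (s1 * t + s2)) \<in> codeCD m)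
    \<and> (\<forall>w>0. (\<exists>c \<in> (codeCD m :: ('a \<Rightarrow> 'a) set). hweight c = w) \<longrightarrow>
          (\<exists>lam. \<forall>T :: 'a set. card T = 2 \<longrightarrow>
              card {B \<in> {supp c | c. c \<in> (codeCD m :: ('a \<Rightarrow> 'a) set) \<and> hweight c = w}. T \<subseteq> B} = lam))"
proof -
  interpret gf_3_2m m "TYPE('a)" using assms by unfold_locales
  show ?thesis
  proof (intro conjI allI impI)
    show "(codeCD m :: ('a \<Rightarrow> 'a) set) = codeE m" using CD_subset_CE CE_subset_CD by (rule subset_antisym)
  next
    fix s1 s2 :: 'a and c assume "s1 \<noteq> 0" "c \<in> (codeCD m :: ('a \<Rightarrow> 'a) set)"
    then show "(\<lambda>t. c (s1 * t + s2)) \<in> codeCD m" by (intro codeCD_affine)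
  next
    fix w :: nat
    show "\<exists>lam. \<forall>T :: 'a set. card T = 2 \<longrightarrow>
        card {B \<in> {supp c | c. c \<in> (codeCD m :: ('a \<Rightarrow> 'a) set) \<and> hweight c = w}. T \<subseteq> B} = lam"
      using card_weight_blocks_through_pair unfolding weight_blocks_def by blast
  qed
qed

end
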